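(* Let $E$ and $F$ be Banach lattices such that the norm of $E'$ is order continuous and $F$ is reflexive. Then each weak Dunford–Pettis operator from $E$ into $F$ is uaw-Dunford–Pettis.
   Context: All operators are continuous linear operators. A net $(x_\alpha)$ in a Banach lattice $E$ is uaw-convergent to $x$ (written $x_\alpha\xrightarrow{uaw}x$) if $|x_\alpha-x|\wedge u\to 0$ weakly for every $u\in E_+$. An operator $T$ from a Banach lattice $E$ into a Banach space $X$ is uaw-Dunford–Pettis if for every norm bounded sequence $(x_n)$ in $E$ with $x_n\xrightarrow{uaw}0$ one has $\|Tx_n\|\to 0$. An operator $T:X\to Y$ between Banach spaces is weak Dunford–Pettis if $f_n(Tx_n)\to 0$ for every weakly null sequence $(x_n)$ in $X$ and every weakly null sequence $(f_n)$ in $Y'$. *)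

theory Defs
  imports "HOL-Analysis.Analysis"
begin

class banach_lattice = banach + ordered_real_vector + lattice +
  assumes lattice_norm_mono:
    "sup x (- x) \<le> sup y (- y) \<Longrightarrow> norm x \<le> norm y"

definition lmod :: "'a::banach_lattice \<Rightarrow> 'a" where
  "lmod x = sup x (- x)"

text \<open>The (norm) dual E' of E is the space of continuous linear functionals,
  \<open>'a \<Rightarrow>\<^sub>L real\<close>, with the operator norm. Its order is the dual order.\<close>

definition dual_le :: "('a::banach_lattice \<Rightarrow>\<^sub>L real) \<Rightarrow> ('a \<Rightarrow>\<^sub>L real) \<Rightarrow> bool" where
  "dual_le f g \<longleftrightarrow> (\<forall>x. 0 \<le> x \<longrightarrow> blinfun_apply f x \<le> blinfun_apply g x)"

definition dual_norm_order_continuous :: "'a::banach_lattice itself \<Rightarrow> bool" where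
  "dual_norm_order_continuous (_ :: 'a itself) \<longleftrightarrow>
    (\<forall>D :: ('a \<Rightarrow>\<^sub>L real) set.
       D \<noteq> {} \<and>
       (\<forall>f\<in>D. \<forall>g\<in>D. \<exists>h\<in>D. dual_le h f \<and> dual_le h g) \<and>
       (\<forall>f\<in>D. dual_le 0 f) \<and>
       (\<forall>g. (\<forall>f\<in>D. dual_le g f) \<longrightarrow> dual_le g 0)
       \<longrightarrow> (\<forall>e>0. \<exists>f\<in>D. norm f < e))"

definition reflexive_space :: "'b::real_normed_vector itself \<Rightarrow> bool" where
  "reflexive_space (_ :: 'b itself) \<longleftrightarrow>
    (\<forall>\<phi> :: ('b \<Rightarrow>\<^sub>L real) \<Rightarrow>\<^sub>L real. \<exists>y::'b.
        \<forall>f. blinfun_apply \<phi> f = blinfun_apply f y)"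

definition weakly_null :: "(nat \<Rightarrow> 'a::real_normed_vector) \<Rightarrow> bool" where
  "weakly_null x \<longleftrightarrow> (\<forall>f :: 'a \<Rightarrow>\<^sub>L real. (\<lambda>n. blinfun_apply f (x n)) \<longlonglongrightarrow> 0)"

definition uaw_null :: "(nat \<Rightarrow> 'a::banach_lattice) \<Rightarrow> bool" where
  "uaw_null x \<longleftrightarrow> (\<forall>u. 0 \<le> u \<longrightarrow> weakly_null (\<lambda>n. inf (lmod (x n)) u))"

definition weak_Dunford_Pettis :: "('a::real_normed_vector \<Rightarrow>\<^sub>L 'b::real_normed_vector) \<Rightarrow> bool" where
  "weak_Dunford_Pettis T \<longleftrightarrow>
    (\<forall>(x :: nat \<Rightarrow> 'a) (f :: nat \<Rightarrow> ('b \<Rightarrow>\<^sub>L real)).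
       weakly_null x \<and> weakly_null f \<longrightarrow>
       (\<lambda>n. blinfun_apply (f n) (blinfun_apply T (x n))) \<longlonglongrightarrow> 0)"

definition uaw_Dunford_Pettis :: "('a::banach_lattice \<Rightarrow>\<^sub>L 'b::real_normed_vector) \<Rightarrow> bool" where
  "uaw_Dunford_Pettis T \<longleftrightarrow>
    (\<forall>x :: nat \<Rightarrow> 'a. bounded (range x) \<and> uaw_null x \<longrightarrow>
       (\<lambda>n. norm (blinfun_apply T (x n))) \<longlonglongrightarrow> 0)"

end

theory Submission
  imports Defs "HOL-Library.Lattice_Algebras" "HOL-Library.Diagonal_Subsequence"
begin

(* A bounded uaw-null sequence is weakly null when the norm of E' is order continuous. By the
   Riesz decomposition it suffices to show f |x n| \<rightarrow> 0 for positive f. If this fails, a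
   disjointification of a subsequence yields a bounded disjoint sequence of positive elements on
   which f stays away from 0; but order continuity of the norm of E' makes the components of f
   on the tail bands tend to 0 in norm, so f vanishes along every bounded disjoint sequence.
   A weak Dunford-Pettis operator T into a reflexive space maps weakly null sequences to norm
   null ones: norming functionals g n of T (x n) have a weak* convergent subsequence g n \<rightarrow> h, by
   reflexivity g n - h is weakly null, and g n (T (x n)) = (g n - h) (T (x n)) + h (T (x n)). *)

section \<open>The Hahn--Banach theorem\<close>

text \<open>Partial linear functionals are encoded by their graphs, so that a chain of extensions
  is joined by taking the union.\<close>

definition dominated_linear_graph ::
    "('a::real_vector \<Rightarrow> real) \<Rightarrow> 'a set \<Rightarrow> ('a \<Rightarrow> real) \<Rightarrow> ('a \<times> real) set \<Rightarrow> bool" where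
  "dominated_linear_graph p M \<phi> G \<longleftrightarrow>
     (\<forall>x y y'. (x, y) \<in> G \<longrightarrow> (x, y') \<in> G \<longrightarrow> y = y') \<and>
     (\<forall>x y x' y'. (x, y) \<in> G \<longrightarrow> (x', y') \<in> G \<longrightarrow> (x + x', y + y') \<in> G) \<and>
     (\<forall>c x y. (x, y) \<in> G \<longrightarrow> (c *\<^sub>R x, c * y) \<in> G) \<and>
     (\<forall>x\<in>M. (x, \<phi> x) \<in> G) \<and> (0, 0) \<in> G \<and>
     (\<forall>x y. (x, y) \<in> G \<longrightarrow> y \<le> p x)"

lemma dominated_linear_graphD:
  assumes "dominated_linear_graph p M \<phi> G"
  shows "(x, y) \<in> G \<Longrightarrow> (x, y') \<in> G \<Longrightarrow> y = y'"
    and "(x, y) \<in> G \<Longrightarrow> (x', y') \<in> G \<Longrightarrow> (x + x', y + y') \<in> G"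
    and "(x, y) \<in> G \<Longrightarrow> (c *\<^sub>R x, c * y) \<in> G"
    and "x \<in> M \<Longrightarrow> (x, \<phi> x) \<in> G"
    and "(0, 0) \<in> G"
    and "(x, y) \<in> G \<Longrightarrow> y \<le> p x"
  using assms unfolding dominated_linear_graph_def by blast+

lemma dominated_linear_graph_step_constant:
  assumes subadd: "\<And>x y. p (x + y) \<le> p x + p y"
    and G: "dominated_linear_graph p M \<phi> G"
  obtains c where "\<And>u y. (u, y) \<in> G \<Longrightarrow> y - p (u - x0) \<le> c"
    and "\<And>v z. (v, z) \<in> G \<Longrightarrow> c \<le> p (v + x0) - z"
proof -
  have key: "y - p (u - x0) \<le> p (v + x0) - z" if "(u, y) \<in> G" "(v, z) \<in> G" for u y v z
  proof -
    have "(u + v, y + z) \<in> G" using dominated_linear_graphD(2)[OF G that] .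
    then have "y + z \<le> p ((u - x0) + (v + x0))" using dominated_linear_graphD(6)[OF G] by simp
    also have "\<dots> \<le> p (u - x0) + p (v + x0)" by (rule subadd)
    finally show ?thesis by simp
  qed
  define A where "A = {y - p (u - x0) | u y. (u, y) \<in> G}"
  have "A \<noteq> {}" using dominated_linear_graphD(5)[OF G] unfolding A_def by blast
  have "bdd_above A"
    unfolding A_def bdd_above_def using key[OF _ dominated_linear_graphD(5)[OF G]] by auto
  show thesis
  proof (rule that[of "Sup A"])
    show "y - p (u - x0) \<le> Sup A" if "(u, y) \<in> G" for u y
      by (rule cSup_upper[OF _ \<open>bdd_above A\<close>]) (use that A_def in blast)
    show "Sup A \<le> p (v + x0) - z" if "(v, z) \<in> G" for v z
      by (rule cSup_least[OF \<open>A \<noteq> {}\<close>]) (use key[OF _ that] A_def in blast)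
  qed
qed

lemma dominated_linear_graph_step_bound:
  assumes homog: "\<And>c x. 0 \<le> c \<Longrightarrow> p (c *\<^sub>R x) = c * p x"
    and G: "dominated_linear_graph p M \<phi> G" and uz: "(u, z) \<in> G"
    and c_ge: "\<And>u y. (u, y) \<in> G \<Longrightarrow> y - p (u - x0) \<le> c"
    and c_le: "\<And>v z. (v, z) \<in> G \<Longrightarrow> c \<le> p (v + x0) - z"
  shows "z + t * c \<le> p (u + t *\<^sub>R x0)"
proof -
  have scaled: "((1 / s) *\<^sub>R u, (1 / s) * z) \<in> G" for s
    using dominated_linear_graphD(3)[OF G uz] .
  consider "t = 0" | "t > 0" | "t < 0" by linarith
  then show ?thesis
  proof cases
    case 1
    then show ?thesis using dominated_linear_graphD(6)[OF G uz] by simp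
  next
    case 2
    have "t * c \<le> t * (p ((1 / t) *\<^sub>R u + x0) - (1 / t) * z)"
      using c_le[OF scaled] 2 by (simp add: mult_left_mono)
    also have "\<dots> = p (t *\<^sub>R ((1 / t) *\<^sub>R u + x0)) - z"
      using 2 homog[of t] by (simp add: right_diff_distrib)
    finally show ?thesis using 2 by (simp add: algebra_simps)
  next
    case 3
    define s where "s = - t"
    have s: "s > 0" using 3 by (simp add: s_def)
    have "s * ((1 / s) * z - p ((1 / s) *\<^sub>R u - x0)) \<le> s * c"
      using c_ge[OF scaled] s by (intro mult_left_mono) auto
    moreover have "s * p ((1 / s) *\<^sub>R u - x0) = p (s *\<^sub>R ((1 / s) *\<^sub>R u - x0))"
      using s homog[of s] by simp
    moreover have "s *\<^sub>R ((1 / s) *\<^sub>R u - x0) = u + t *\<^sub>R x0"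
      using s by (simp add: s_def scaleR_diff_right)
    ultimately have "z - p (u + t *\<^sub>R x0) \<le> s * c" using s by (simp add: right_diff_distrib)
    then show ?thesis by (simp add: s_def)
  qed
qed

lemma dominated_linear_graph_extend:
  fixes p :: "'a::real_vector \<Rightarrow> real"
  assumes subadd: "\<And>x y. p (x + y) \<le> p x + p y"
    and homog: "\<And>c x. 0 \<le> c \<Longrightarrow> p (c *\<^sub>R x) = c * p x"
    and G: "dominated_linear_graph p M \<phi> G" and x0: "x0 \<notin> fst ` G"
  shows "\<exists>G'. dominated_linear_graph p M \<phi> G' \<and> G \<subset> G'"
proof -
  note GD = dominated_linear_graphD[OF G]
  obtain c where c_ge: "\<And>u y. (u, y) \<in> G \<Longrightarrow> y - p (u - x0) \<le> c"
    and c_le: "\<And>v z. (v, z) \<in> G \<Longrightarrow> c \<le> p (v + x0) - z"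
    using dominated_linear_graph_step_constant[OF subadd G] by metis
  define G' where "G' = {(u + t *\<^sub>R x0, y + t * c) | u y t. (u, y) \<in> G}"
  have memI: "(u + t *\<^sub>R x0, z + t * c) \<in> G'" if "(u, z) \<in> G" for u z t
    using that unfolding G'_def by blast
  have unique: "t = t'" if "(u, y) \<in> G" "(u', y') \<in> G" "u + t *\<^sub>R x0 = u' + t' *\<^sub>R x0"
    for u y u' y' t t'
  proof (rule ccontr)
    assume "t \<noteq> t'"
    have "(t - t') *\<^sub>R x0 = u' + (-1) *\<^sub>R u" using that(3) by (simp add: algebra_simps)
    moreover have "x0 = (1 / (t - t')) *\<^sub>R ((t - t') *\<^sub>R x0)" using \<open>t \<noteq> t'\<close> by simp
    ultimately have "x0 = (1 / (t - t')) *\<^sub>R (u' + (-1) *\<^sub>R u)" by simp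
    moreover have "(u' + (-1) *\<^sub>R u, y' + (-1) * y) \<in> G" using GD(2)[OF that(2) GD(3)[OF that(1)]] .
    ultimately have "(x0, (1 / (t - t')) * (y' + (-1) * y)) \<in> G" using GD(3) by metis
    with x0 show False by force
  qed
  have "dominated_linear_graph p M \<phi> G'"
    unfolding dominated_linear_graph_def
  proof (intro conjI allI impI ballI)
    fix x y y' assume "(x, y) \<in> G'" "(x, y') \<in> G'"
    then obtain u z t u' z' t' where "(u, z) \<in> G" "(u', z') \<in> G" "x = u + t *\<^sub>R x0" "y = z + t * c"
      "x = u' + t' *\<^sub>R x0" "y' = z' + t' * c" unfolding G'_def by blast
    then show "y = y'" using unique[of u z u' z' t t'] GD(1) by auto
  next
    fix x y x' y' assume "(x, y) \<in> G'" "(x', y') \<in> G'"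
    then obtain u z t u' z' t' where "(u, z) \<in> G" "(u', z') \<in> G" "x = u + t *\<^sub>R x0" "y = z + t * c"
      "x' = u' + t' *\<^sub>R x0" "y' = z' + t' * c" unfolding G'_def by blast
    then show "(x + x', y + y') \<in> G'"
      using memI[OF GD(2), of u z u' z' "t + t'"] by (simp add: algebra_simps)
  next
    fix a x y assume "(x, y) \<in> G'"
    then obtain u z t where "(u, z) \<in> G" "x = u + t *\<^sub>R x0" "y = z + t * c"
      unfolding G'_def by blast
    then show "(a *\<^sub>R x, a * y) \<in> G'"
      using memI[OF GD(3), of u z a "a * t"] by (simp add: algebra_simps)
  next
    fix x assume "x \<in> M"
    then show "(x, \<phi> x) \<in> G'" using memI[OF GD(4), of x 0] by simp
  next
    show "(0, 0) \<in> G'" using memI[OF GD(5), of 0] by simp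
  next
    fix x y assume "(x, y) \<in> G'"
    then obtain u z t where "(u, z) \<in> G" "x = u + t *\<^sub>R x0" "y = z + t * c"
      unfolding G'_def by blast
    then show "y \<le> p x" using dominated_linear_graph_step_bound[OF homog G _ c_ge c_le] by blast
  qed
  moreover have "G \<subseteq> G'" using memI[of _ _ 0] by auto
  moreover have "(x0, c) \<in> G' - G" using memI[OF GD(5), of 1] x0 by force
  ultimately show ?thesis by blast
qed

lemma dominated_linear_graph_Union_chain:
  assumes "\<C> \<noteq> {}" and chain: "subset.chain {G. dominated_linear_graph p M \<phi> G} \<C>"
  shows "dominated_linear_graph p M \<phi> (\<Union>\<C>)"
proof -
  have good: "\<And>G. G \<in> \<C> \<Longrightarrow> dominated_linear_graph p M \<phi> G"
    using chain unfolding subset_chain_def by blast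
  have common: "\<exists>G\<in>\<C>. a \<in> G \<and> b \<in> G" if "a \<in> \<Union>\<C>" "b \<in> \<Union>\<C>" for a b
    using that chain unfolding subset_chain_def by blast
  obtain G0 where G0: "G0 \<in> \<C>" using assms(1) by blast
  show ?thesis
    unfolding dominated_linear_graph_def
  proof (intro conjI allI impI ballI)
    fix x y y' assume "(x, y) \<in> \<Union>\<C>" "(x, y') \<in> \<Union>\<C>"
    then obtain G where "G \<in> \<C>" "(x, y) \<in> G" "(x, y') \<in> G" using common by blast
    then show "y = y'" using good dominated_linear_graphD(1) by blast
  next
    fix x y x' y' assume "(x, y) \<in> \<Union>\<C>" "(x', y') \<in> \<Union>\<C>"
    then obtain G where "G \<in> \<C>" "(x, y) \<in> G" "(x', y') \<in> G" using common by blast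
    then show "(x + x', y + y') \<in> \<Union>\<C>" using good dominated_linear_graphD(2) by blast
  next
    fix c x y assume "(x, y) \<in> \<Union>\<C>"
    then show "(c *\<^sub>R x, c * y) \<in> \<Union>\<C>" using good dominated_linear_graphD(3) by blast
  next
    fix x assume "x \<in> M"
    then show "(x, \<phi> x) \<in> \<Union>\<C>" using G0 good dominated_linear_graphD(4) by blast
  next
    show "(0, 0) \<in> \<Union>\<C>" using G0 good dominated_linear_graphD(5) by blast
  next
    fix x y assume "(x, y) \<in> \<Union>\<C>"
    then show "y \<le> p x" using good dominated_linear_graphD(6) by blast
  qed
qed

theorem Hahn_Banach_sublinear:
  fixes p :: "'a::real_vector \<Rightarrow> real"
  assumes subadd: "\<And>x y. p (x + y) \<le> p x + p y"
    and homog: "\<And>c x. 0 \<le> c \<Longrightarrow> p (c *\<^sub>R x) = c * p x"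
    and M: "subspace M"
    and \<phi>_add: "\<And>x y. x \<in> M \<Longrightarrow> y \<in> M \<Longrightarrow> \<phi> (x + y) = \<phi> x + \<phi> y"
    and \<phi>_scale: "\<And>c x. x \<in> M \<Longrightarrow> \<phi> (c *\<^sub>R x) = c * \<phi> x"
    and \<phi>_le: "\<And>x. x \<in> M \<Longrightarrow> \<phi> x \<le> p x"
  shows "\<exists>f. linear f \<and> (\<forall>x\<in>M. f x = \<phi> x) \<and> (\<forall>x. f x \<le> p x)"
proof -
  define \<Gamma> where "\<Gamma> = {(x, \<phi> x) | x. x \<in> M}"
  have mem_\<Gamma>: "(x, y) \<in> \<Gamma> \<longleftrightarrow> x \<in> M \<and> y = \<phi> x" for x y
    unfolding \<Gamma>_def by blast
  have "\<phi> 0 = 0" using \<phi>_scale[OF subspace_0[OF M], of 0] by simp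
  then have "dominated_linear_graph p M \<phi> \<Gamma>"
    unfolding dominated_linear_graph_def mem_\<Gamma>
    by (simp add: \<phi>_add \<phi>_scale \<phi>_le subspace_0[OF M] subspace_add[OF M] subspace_scale[OF M])
  then have "\<exists>G\<in>{G. dominated_linear_graph p M \<phi> G}.
      \<forall>G'\<in>{G. dominated_linear_graph p M \<phi> G}. G \<subseteq> G' \<longrightarrow> G' = G"
    by (intro subset_Zorn_nonempty) (auto intro: dominated_linear_graph_Union_chain)
  then obtain G where G: "dominated_linear_graph p M \<phi> G"
    and maximal: "\<And>G'. dominated_linear_graph p M \<phi> G' \<Longrightarrow> G \<subseteq> G' \<Longrightarrow> G' = G"
    by blast
  note GD = dominated_linear_graphD[OF G]
  have total: "\<exists>y. (x, y) \<in> G" for x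
  proof (rule ccontr)
    assume "\<nexists>y. (x, y) \<in> G"
    then have "x \<notin> fst ` G" by force
    then obtain G' where "dominated_linear_graph p M \<phi> G'" "G \<subset> G'"
      using dominated_linear_graph_extend[OF subadd homog G] by blast
    with maximal show False by blast
  qed
  define f where "f x = (THE y. (x, y) \<in> G)" for x
  have f_graph: "(x, f x) \<in> G" for x
    unfolding f_def using total[of x] GD(1) by (metis theI)
  have f_eq: "f x = y" if "(x, y) \<in> G" for x y
    using GD(1)[OF f_graph that] .
  have "linear f"
  proof (rule linearI)
    show "f (x + y) = f x + f y" for x y by (rule f_eq[OF GD(2)[OF f_graph f_graph]])
    show "f (c *\<^sub>R x) = c *\<^sub>R f x" for c x using f_eq[OF GD(3)[OF f_graph]] by simp
  qed
  moreover have "\<forall>x\<in>M. f x = \<phi> x" using f_eq[OF GD(4)] by blast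
  moreover have "\<forall>x. f x \<le> p x" using GD(6)[OF f_graph] by blast
  ultimately show ?thesis by blast
qed

lemma Hahn_Banach_bounded:
  fixes \<phi> :: "'a::real_normed_vector \<Rightarrow> real"
  assumes M: "subspace M"
    and \<phi>_add: "\<And>x y. x \<in> M \<Longrightarrow> y \<in> M \<Longrightarrow> \<phi> (x + y) = \<phi> x + \<phi> y"
    and \<phi>_scale: "\<And>c x. x \<in> M \<Longrightarrow> \<phi> (c *\<^sub>R x) = c * \<phi> x"
    and C: "0 \<le> C" and bound: "\<And>x. x \<in> M \<Longrightarrow> \<bar>\<phi> x\<bar> \<le> C * norm x"
  shows "\<exists>f::'a \<Rightarrow>\<^sub>L real. (\<forall>x\<in>M. f x = \<phi> x) \<and> (\<forall>x. \<bar>f x\<bar> \<le> C * norm x)"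
proof -
  have "\<exists>f. linear f \<and> (\<forall>x\<in>M. f x = \<phi> x) \<and> (\<forall>x. f x \<le> C * norm x)"
  proof (rule Hahn_Banach_sublinear[OF _ _ M \<phi>_add \<phi>_scale])
    show "C * norm (x + y) \<le> C * norm x + C * norm y" for x y
      using C norm_triangle_ineq[of x y] by (simp add: mult_left_mono distrib_left[symmetric])
    show "\<phi> x \<le> C * norm x" if "x \<in> M" for x using bound[OF that] by simp
  qed auto
  then obtain f where f: "linear f" "\<forall>x\<in>M. f x = \<phi> x" "\<forall>x. f x \<le> C * norm x" by blast
  have abs_f: "\<bar>f x\<bar> \<le> C * norm x" for x
    using f(3)[rule_format, of x] f(3)[rule_format, of "- x"] linear_neg[OF f(1), of x] by simp
  have "bounded_linear f"
    using f(1) abs_f by (intro bounded_linear_intro[of f C]) (auto simp: linear_add linear_scale mult.commute)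
  then show ?thesis
    using f(2) abs_f by (intro exI[of _ "Blinfun f"]) (simp add: bounded_linear_Blinfun_apply)
qed

lemma functional_on_subspace_sum:
  fixes \<psi> :: "'a::real_vector \<Rightarrow> real"
  assumes Z: "subspace Z" and W: "subspace W"
    and \<psi>_add: "\<And>x y. x \<in> Z \<Longrightarrow> y \<in> Z \<Longrightarrow> \<psi> (x + y) = \<psi> x + \<psi> y"
    and \<psi>_scale: "\<And>c x. x \<in> Z \<Longrightarrow> \<psi> (c *\<^sub>R x) = c * \<psi> x"
    and vanish: "\<And>z w. z \<in> Z \<Longrightarrow> w \<in> W \<Longrightarrow> z + w = 0 \<Longrightarrow> \<psi> z = 0"
  shows "\<exists>\<phi>. \<forall>z\<in>Z. \<forall>w\<in>W. \<phi> (z + w) = \<psi> z"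
proof -
  have well_defined: "\<psi> z = \<psi> z'" if "z \<in> Z" "w \<in> W" "z' \<in> Z" "w' \<in> W" "z + w = z' + w'"
    for z w z' w'
  proof -
    have "z + (-1) *\<^sub>R z' \<in> Z" "w - w' \<in> W"
      using that Z W by (simp_all add: subspace_add subspace_scale subspace_diff)
    moreover have "(z + (-1) *\<^sub>R z') + (w - w') = 0" using that(5) by (simp add: algebra_simps)
    ultimately have "\<psi> (z + (-1) *\<^sub>R z') = 0" by (rule vanish)
    moreover have "\<psi> (z + (-1) *\<^sub>R z') = \<psi> z - \<psi> z'"
      using \<psi>_add[OF that(1) subspace_scale[OF Z that(3)], of "-1"] \<psi>_scale[OF that(3), of "-1"]
      by simp
    ultimately show ?thesis by simp
  qed
  define \<phi> where "\<phi> s = \<psi> (SOME z. z \<in> Z \<and> (\<exists>w\<in>W. s = z + w))" for s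
  have "\<phi> (z + w) = \<psi> z" if "z \<in> Z" "w \<in> W" for z w
  proof -
    have "\<exists>z'. z' \<in> Z \<and> (\<exists>w'\<in>W. z + w = z' + w')" using that by blast
    from someI_ex[OF this] obtain w' where "(SOME z'. z' \<in> Z \<and> (\<exists>w'\<in>W. z + w = z' + w')) \<in> Z"
      "w' \<in> W" "z + w = (SOME z'. z' \<in> Z \<and> (\<exists>w'\<in>W. z + w = z' + w')) + w'" by blast
    then show ?thesis unfolding \<phi>_def using well_defined[OF that] by metis
  qed
  then show ?thesis by blast
qed

lemma Hahn_Banach_vanishing:
  fixes \<psi> :: "'a::real_normed_vector \<Rightarrow> real"
  assumes Z: "subspace Z" and W: "subspace W"
    and \<psi>_add: "\<And>x y. x \<in> Z \<Longrightarrow> y \<in> Z \<Longrightarrow> \<psi> (x + y) = \<psi> x + \<psi> y"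
    and \<psi>_scale: "\<And>c x. x \<in> Z \<Longrightarrow> \<psi> (c *\<^sub>R x) = c * \<psi> x"
    and C: "0 \<le> C" and bound: "\<And>z w. z \<in> Z \<Longrightarrow> w \<in> W \<Longrightarrow> \<bar>\<psi> z\<bar> \<le> C * norm (z + w)"
  shows "\<exists>f::'a \<Rightarrow>\<^sub>L real. (\<forall>z\<in>Z. f z = \<psi> z) \<and> (\<forall>w\<in>W. f w = 0) \<and> (\<forall>x. \<bar>f x\<bar> \<le> C * norm x)"
proof -
  define S where "S = {z + w | z w. z \<in> Z \<and> w \<in> W}"
  have S: "subspace S" unfolding S_def by (rule subspace_sums[OF Z W])
  have "\<exists>\<phi>. \<forall>z\<in>Z. \<forall>w\<in>W. \<phi> (z + w) = \<psi> z"
  proof (rule functional_on_subspace_sum[OF Z W])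
    show "\<psi> (x + y) = \<psi> x + \<psi> y" if "x \<in> Z" "y \<in> Z" for x y using that by (rule \<psi>_add)
    show "\<psi> (c *\<^sub>R x) = c * \<psi> x" if "x \<in> Z" for c x using that by (rule \<psi>_scale)
    show "\<psi> z = 0" if "z \<in> Z" "w \<in> W" "z + w = 0" for z w using bound[OF that(1,2)] that(3) by simp
  qed
  then obtain \<phi> where \<phi>_eq: "\<And>z w. z \<in> Z \<Longrightarrow> w \<in> W \<Longrightarrow> \<phi> (z + w) = \<psi> z" by blast
  have S_cases: "\<exists>z w. z \<in> Z \<and> w \<in> W \<and> s = z + w" if "s \<in> S" for s
    using that unfolding S_def by blast
  have "\<exists>f::'a \<Rightarrow>\<^sub>L real. (\<forall>x\<in>S. f x = \<phi> x) \<and> (\<forall>x. \<bar>f x\<bar> \<le> C * norm x)"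
  proof (rule Hahn_Banach_bounded[OF S _ _ C])
    fix s s' assume "s \<in> S" "s' \<in> S"
    then obtain z w z' w' where "z \<in> Z" "w \<in> W" "z' \<in> Z" "w' \<in> W" "s = z + w" "s' = z' + w'"
      using S_cases by metis
    moreover have "\<phi> ((z + z') + (w + w')) = \<phi> (z + w) + \<phi> (z' + w')"
      using calculation \<phi>_eq \<psi>_add Z W by (simp add: subspace_add)
    ultimately show "\<phi> (s + s') = \<phi> s + \<phi> s'" by (simp add: algebra_simps)
  next
    fix c s assume "s \<in> S"
    then obtain z w where "z \<in> Z" "w \<in> W" "s = z + w" using S_cases by metis
    moreover have "c *\<^sub>R s = c *\<^sub>R z + c *\<^sub>R w" using calculation by (simp add: scaleR_right_distrib)
    ultimately show "\<phi> (c *\<^sub>R s) = c * \<phi> s"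
      using \<phi>_eq \<psi>_scale Z W by (simp add: subspace_scale)
  next
    fix s assume "s \<in> S"
    then obtain z w where "z \<in> Z" "w \<in> W" "s = z + w" using S_cases by metis
    then show "\<bar>\<phi> s\<bar> \<le> C * norm s" using \<phi>_eq bound by simp
  qed
  then obtain f :: "'a \<Rightarrow>\<^sub>L real" where f: "\<forall>x\<in>S. f x = \<phi> x" "\<forall>x. \<bar>f x\<bar> \<le> C * norm x"
    by blast
  have in_S: "z + w \<in> S" if "z \<in> Z" "w \<in> W" for z w using that unfolding S_def by blast
  have "f z = \<psi> z" if "z \<in> Z" for z
    using f(1) in_S[OF that subspace_0[OF W]] \<phi>_eq[OF that subspace_0[OF W]] by simp
  moreover have "f w = 0" if "w \<in> W" for w
    using f(1) in_S[OF subspace_0[OF Z] that] \<phi>_eq[OF subspace_0[OF Z] that]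
      \<psi>_scale[OF subspace_0[OF Z], of 0] by simp
  ultimately show ?thesis using f(2) by blast
qed

lemma separating_functional:
  fixes V :: "'a::real_normed_vector set"
  assumes V: "subspace V" "closed V" and w: "w \<notin> V"
  shows "\<exists>f::'a \<Rightarrow>\<^sub>L real. (\<forall>v\<in>V. f v = 0) \<and> f w = infdist w V \<and> (\<forall>x. \<bar>f x\<bar> \<le> norm x)"
proof -
  define d where "d = infdist w V"
  have "w \<noteq> 0" using w subspace_0[OF V(1)] by blast
  define L where "L = range (\<lambda>t. t *\<^sub>R w)"
  have L: "subspace L"
    unfolding subspace_def L_def
    by (auto simp: scaleR_add_left[symmetric] intro: range_eqI[of _ _ 0] range_eqI)
  define \<psi> where "\<psi> x = (SOME t. x = t *\<^sub>R w) * d" for x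
  have \<psi>_eq: "\<psi> (t *\<^sub>R w) = t * d" for t
    unfolding \<psi>_def using \<open>w \<noteq> 0\<close> by (subst some_equality[of _ t]) auto
  have "\<exists>f::'a \<Rightarrow>\<^sub>L real. (\<forall>z\<in>L. f z = \<psi> z) \<and> (\<forall>v\<in>V. f v = 0) \<and> (\<forall>x. \<bar>f x\<bar> \<le> 1 * norm x)"
  proof (rule Hahn_Banach_vanishing[OF L V(1)])
    show "\<psi> (x + y) = \<psi> x + \<psi> y" if "x \<in> L" "y \<in> L" for x y
      using that \<psi>_eq unfolding L_def by (auto simp: scaleR_add_left[symmetric] distrib_right)
    show "\<psi> (c *\<^sub>R x) = c * \<psi> x" if "x \<in> L" for c x
      using that \<psi>_eq unfolding L_def by auto
    show "\<bar>\<psi> z\<bar> \<le> 1 * norm (z + v)" if "z \<in> L" "v \<in> V" for z v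
    proof -
      obtain t where z: "z = t *\<^sub>R w" using \<open>z \<in> L\<close> unfolding L_def by blast
      show ?thesis
      proof (cases "t = 0")
        case False
        have "(1 / t) *\<^sub>R (- v) \<in> V" using V(1) \<open>v \<in> V\<close> by (simp add: subspace_scale subspace_neg)
        then have "d \<le> dist w ((1 / t) *\<^sub>R (- v))" unfolding d_def by (rule infdist_le)
        also have "\<dots> = norm (w + (1 / t) *\<^sub>R v)" by (simp add: dist_norm)
        finally have "\<bar>t\<bar> * d \<le> \<bar>t\<bar> * norm (w + (1 / t) *\<^sub>R v)" by (simp add: mult_left_mono)
        also have "\<dots> = norm (z + v)"
          using False by (simp add: z scaleR_right_distrib flip: norm_scaleR)
        finally show ?thesis using infdist_nonneg[of w V] by (simp add: z \<psi>_eq d_def abs_mult)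
      qed (use \<psi>_eq[of 0] in \<open>simp add: z\<close>)
    qed
  qed simp
  then obtain f :: "'a \<Rightarrow>\<^sub>L real" where "\<forall>z\<in>L. f z = \<psi> z" "\<forall>v\<in>V. f v = 0" "\<forall>x. \<bar>f x\<bar> \<le> norm x"
    by auto
  moreover have "f w = d" using calculation(1) \<psi>_eq[of 1] unfolding L_def by (metis rangeI scaleR_one mult_1)
  ultimately show ?thesis unfolding d_def by blast
qed

lemma norming_functional:
  fixes y :: "'a::real_normed_vector"
  shows "\<exists>f::'a \<Rightarrow>\<^sub>L real. f y = norm y \<and> (\<forall>x. \<bar>f x\<bar> \<le> norm x)"
proof (cases "y = 0")
  case True
  then show ?thesis by (intro exI[of _ 0]) auto
next
  case False
  then show ?thesis using separating_functional[of "{0}" y] by (auto simp: dist_norm)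
qed

text \<open>Finite rational combinations of a sequence form a countable set dense in its closed span;
  this is the substitute for separability below.\<close>

section \<open>Weak* sequential compactness in the dual of a reflexive space\<close>

definition rat_combination :: "(nat \<Rightarrow> 'a::real_vector) \<Rightarrow> rat list \<Rightarrow> 'a" where
  "rat_combination a l = (\<Sum>i<length l. real_of_rat (l ! i) *\<^sub>R a i)"

definition rat_span :: "(nat \<Rightarrow> 'a::real_vector) \<Rightarrow> 'a set" where
  "rat_span a = range (rat_combination a)"

lemma rat_combination_pad:
  assumes "length l \<le> N"
  shows "rat_combination a l = (\<Sum>i<N. real_of_rat (nth_default 0 l i) *\<^sub>R a i)"
proof -
  have "(\<Sum>i<N. real_of_rat (nth_default 0 l i) *\<^sub>R a i)
      = (\<Sum>i<length l. real_of_rat (nth_default 0 l i) *\<^sub>R a i)"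
    by (rule sum.mono_neutral_right) (use assms in \<open>auto simp: nth_default_def\<close>)
  also have "\<dots> = rat_combination a l"
    unfolding rat_combination_def by (rule sum.cong) (auto simp: nth_default_def)
  finally show ?thesis by simp
qed

lemma countable_rat_span: "countable (rat_span a)"
  unfolding rat_span_def by simp

lemma zero_in_rat_span: "0 \<in> rat_span a"
  unfolding rat_span_def using rangeI[of "rat_combination a" "[]"] by (simp add: rat_combination_def)

lemma generator_in_rat_span: "a i \<in> rat_span a"
proof -
  have "rat_combination a (replicate i 0 @ [1]) = a i"
    by (subst rat_combination_pad[of _ "Suc i"]) (simp_all add: nth_default_def nth_append)
  then show ?thesis unfolding rat_span_def by (metis rangeI)
qed

lemma rat_span_add:
  assumes "x \<in> rat_span a" "y \<in> rat_span a"
  shows "x + y \<in> rat_span a"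
proof -
  obtain l1 l2 where x: "x = rat_combination a l1" and y: "y = rat_combination a l2"
    using assms unfolding rat_span_def by blast
  define N where "N = max (length l1) (length l2)"
  define l where "l = map (\<lambda>i. nth_default 0 l1 i + nth_default 0 l2 i) [0..<N]"
  have "x + y = (\<Sum>i<N. real_of_rat (nth_default 0 l1 i) *\<^sub>R a i)
      + (\<Sum>i<N. real_of_rat (nth_default 0 l2 i) *\<^sub>R a i)"
    using rat_combination_pad[of l1 N a] rat_combination_pad[of l2 N a] x y N_def by simp
  also have "\<dots> = (\<Sum>i<N. real_of_rat (nth_default 0 l i) *\<^sub>R a i)"
    unfolding sum.distrib[symmetric]
    by (rule sum.cong) (auto simp: l_def nth_default_def of_rat_add scaleR_add_left)
  also have "\<dots> = rat_combination a l" using rat_combination_pad[of l N a] l_def by simp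
  finally show ?thesis unfolding rat_span_def by simp
qed

lemma rat_span_scale:
  assumes "x \<in> rat_span a"
  shows "real_of_rat q *\<^sub>R x \<in> rat_span a"
proof -
  obtain l where "x = rat_combination a l" using assms unfolding rat_span_def by blast
  then have "real_of_rat q *\<^sub>R x = rat_combination a (map ((*) q) l)"
    by (simp add: rat_combination_def scaleR_sum_right of_rat_mult)
  then show ?thesis unfolding rat_span_def by simp
qed

lemma subspace_closure_rat_closed:
  fixes S :: "'a::real_normed_vector set"
  assumes "0 \<in> S" and add: "\<And>x y. x \<in> S \<Longrightarrow> y \<in> S \<Longrightarrow> x + y \<in> S"
    and rat_scale: "\<And>q x. x \<in> S \<Longrightarrow> real_of_rat q *\<^sub>R x \<in> S"
  shows "subspace (closure S)"
proof -
  have "(\<lambda>y. s + y) ` closure S \<subseteq> closure S" if "s \<in> S" for s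
    by (rule image_closure_subset) (use that add closure_subset in \<open>auto intro!: continuous_intros\<close>)
  then have "(\<lambda>x. x + y) ` closure S \<subseteq> closure S" if "y \<in> closure S" for y
    by (intro image_closure_subset) (use that in \<open>auto intro!: continuous_intros\<close>)
  then have closure_add: "x + y \<in> closure S" if "x \<in> closure S" "y \<in> closure S" for x y
    using that by blast
  have "(\<lambda>x. real_of_rat q *\<^sub>R x) ` closure S \<subseteq> closure S" for q
    by (rule image_closure_subset) (use rat_scale closure_subset in \<open>auto intro!: continuous_intros\<close>)
  then have "(\<lambda>t. t *\<^sub>R x) ` closure \<rat> \<subseteq> closure S" if "x \<in> closure S" for x
    by (intro image_closure_subset) (use that in \<open>auto elim!: Rats_cases intro!: continuous_intros\<close>)
  then have closure_scale: "c *\<^sub>R x \<in> closure S" if "x \<in> closure S" for c x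
    using that by (auto simp: Rats_closure_real)
  show ?thesis
    unfolding subspace_def using assms(1) closure_subset closure_add closure_scale by blast
qed

lemma subspace_closure_rat_span: "subspace (closure (rat_span (a :: nat \<Rightarrow> 'a::real_normed_vector)))"
  by (rule subspace_closure_rat_closed) (simp_all add: zero_in_rat_span rat_span_add rat_span_scale)

lemma exists_nearly_norming_vector:
  fixes f :: "'b::real_normed_vector \<Rightarrow>\<^sub>L real"
  assumes e: "0 < e"
  shows "\<exists>x. norm x \<le> 1 \<and> norm f - e \<le> f x"
proof (rule ccontr)
  assume "\<not> ?thesis"
  then have small: "f x < norm f - e" if "norm x \<le> 1" for x
    using that by (meson not_le)
  have "\<bar>f x\<bar> \<le> (norm f - e) * norm x" for x
  proof (cases "x = 0")
    case False
    define v where "v = (1 / norm x) *\<^sub>R x"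
    have "norm v = 1" "norm (- v) = 1" using False by (simp_all add: v_def)
    then have "\<bar>f v\<bar> \<le> norm f - e" using small[of v] small[of "- v"] by (simp add: blinfun.minus_right)
    moreover have "f x = norm x * f v" using False by (simp add: v_def blinfun.scaleR_right)
    ultimately show ?thesis by (simp add: abs_mult mult.commute mult_left_mono)
  qed simp
  then have "norm f \<le> norm f - e"
    using small[of 0] by (intro norm_blinfun_bound) auto
  then show False using e by simp
qed

lemma countable_norming_sequence:
  fixes D :: "('b::real_normed_vector \<Rightarrow>\<^sub>L real) set"
  assumes "countable D"
  shows "\<exists>u::nat \<Rightarrow> 'b. (\<forall>n. norm (u n) \<le> 1) \<and>
    (\<forall>z\<in>closure D. \<forall>e>0. \<exists>n. norm z - e \<le> blinfun_apply z (u n))"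
proof (cases "D = {}")
  case True
  then show ?thesis by (intro exI[of _ "\<lambda>_. 0"]) simp
next
  case False
  define d where "d = from_nat_into D"
  have "\<forall>i j. \<exists>x. norm x \<le> 1 \<and> norm (d i) - 1 / real (Suc j) \<le> d i x"
    by (intro allI exists_nearly_norming_vector) simp
  then obtain w where w: "\<And>i j. norm (w i j) \<le> 1 \<and> norm (d i) - 1 / real (Suc j) \<le> d i (w i j)"
    by metis
  show ?thesis
  proof (intro exI[of _ "\<lambda>n. w (fst (prod_decode n)) (snd (prod_decode n))"] conjI allI ballI impI)
    show "norm (w (fst (prod_decode n)) (snd (prod_decode n))) \<le> 1" for n using w by blast
    fix z and e :: real assume z: "z \<in> closure D" and e: "0 < e"
    obtain z' where z': "z' \<in> D" "dist z' z < e / 3"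
      using z e unfolding closure_approachable by (meson divide_pos_pos zero_less_numeral)
    obtain i where i: "d i = z'" using from_nat_into_surj[OF assms z'(1)] d_def by blast
    obtain j where j: "1 / real (Suc j) < e / 3"
      using reals_Archimedean[of "e / 3"] e by (auto simp: inverse_eq_divide)
    have "\<bar>z' (w i j) - z (w i j)\<bar> \<le> norm (z' - z)"
      using norm_blinfun[of "z' - z" "w i j"] w[of i j] mult_left_le[of "norm (w i j)" "norm (z' - z)"]
      by (simp add: blinfun.diff_left)
    moreover have "norm z \<le> norm z' + norm (z' - z)"
      using norm_triangle_ineq4[of z' "z' - z"] by simp
    ultimately have "norm z - e \<le> z (w i j)"
      using w[of i j] j z'(2) unfolding i dist_norm abs_le_iff by linarith
    then show "\<exists>n. norm z - e \<le> z (w (fst (prod_decode n)) (snd (prod_decode n)))"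
      by (intro exI[of _ "prod_encode (i, j)"]) (simp add: prod_encode_inverse)
  qed
qed

text \<open>In a reflexive space, every point agrees on Z with a point of V, provided V norms Z: the
  functional z + h \<mapsto> z y on Z plus the annihilator of V is bounded by norm y, so by
  Hahn--Banach it extends to an element of the bidual, represented by a point of V.\<close>

lemma reflexive_norming_subspace_represents:
  fixes V :: "'b::real_normed_vector set" and Z :: "('b \<Rightarrow>\<^sub>L real) set"
  assumes refl: "reflexive_space TYPE('b)"
    and V: "subspace V" "closed V" and Z: "subspace Z"
    and norming: "\<And>z e. z \<in> Z \<Longrightarrow> 0 < e \<Longrightarrow> \<exists>v\<in>V. norm v \<le> 1 \<and> norm z - e \<le> blinfun_apply z v"
  shows "\<exists>v\<in>V. \<forall>z\<in>Z. blinfun_apply z v = blinfun_apply z y"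
proof -
  define W where "W = {h :: 'b \<Rightarrow>\<^sub>L real. \<forall>v\<in>V. h v = 0}"
  have W: "subspace W"
    unfolding subspace_def W_def by (simp add: blinfun.add_left blinfun.scaleR_left)
  have norm_le: "norm z \<le> norm (z + h)" if "z \<in> Z" "h \<in> W" for z h
  proof (rule field_le_epsilon)
    fix e :: real assume "0 < e"
    then obtain v where v: "v \<in> V" "norm v \<le> 1" "norm z - e \<le> blinfun_apply z v"
      using norming[OF \<open>z \<in> Z\<close>] by blast
    have "(z + h) v = z v" using \<open>h \<in> W\<close> v(1) by (simp add: W_def blinfun.add_left)
    moreover have "\<bar>(z + h) v\<bar> \<le> norm (z + h)"
      using norm_blinfun[of "z + h" v] v(2) mult_left_le[of "norm v" "norm (z + h)"] by simp
    ultimately show "norm z \<le> norm (z + h) + e" using v(3) by linarith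
  qed
  have "\<exists>\<Psi>. (\<forall>z\<in>Z. blinfun_apply \<Psi> z = blinfun_apply z y) \<and> (\<forall>h\<in>W. blinfun_apply \<Psi> h = 0) \<and>
      (\<forall>x. \<bar>blinfun_apply \<Psi> x\<bar> \<le> norm y * norm x)"
  proof (rule Hahn_Banach_vanishing[OF Z W])
    show "\<bar>z y\<bar> \<le> norm y * norm (z + h)" if "z \<in> Z" "h \<in> W" for z h :: "'b \<Rightarrow>\<^sub>L real"
      using norm_blinfun[of z y] mult_left_mono[OF norm_le[OF that], of "norm y"]
      by (simp add: mult.commute)
  qed (simp_all add: blinfun.add_left blinfun.scaleR_left)
  then obtain \<Psi> :: "('b \<Rightarrow>\<^sub>L real) \<Rightarrow>\<^sub>L real" where \<Psi>: "\<forall>z\<in>Z. \<Psi> z = z y" "\<forall>h\<in>W. \<Psi> h = 0"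
    by blast
  obtain v where v: "\<And>f::'b \<Rightarrow>\<^sub>L real. \<Psi> f = f v" using refl unfolding reflexive_space_def by blast
  have "v \<in> V"
  proof (rule ccontr)
    assume "v \<notin> V"
    then obtain f :: "'b \<Rightarrow>\<^sub>L real" where "\<forall>u\<in>V. f u = 0" "f v = infdist v V"
      using separating_functional[OF V] by blast
    moreover have "infdist v V \<noteq> 0"
      using in_closed_iff_infdist_zero[OF V(2)] subspace_0[OF V(1)] \<open>v \<notin> V\<close> by blast
    ultimately show False using \<Psi>(2) v unfolding W_def by auto
  qed
  then show ?thesis using \<Psi>(1) v by metis
qed

lemma diagonal_subsequence_convergent:
  fixes g :: "nat \<Rightarrow> ('b::real_normed_vector \<Rightarrow>\<^sub>L real)" and d :: "nat \<Rightarrow> 'b"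
  assumes g: "\<And>n. norm (g n) \<le> B"
  obtains r where "strict_mono r" "\<And>i. convergent (\<lambda>k. g (r k) (d i))"
proof -
  interpret subseqs "\<lambda>i s. convergent (\<lambda>k. g (s k) (d i))"
  proof
    fix i and s :: "nat \<Rightarrow> nat" assume "strict_mono s"
    obtain f where f: "strict_mono f" "monoseq (\<lambda>n. g (s (f n)) (d i))"
      using seq_monosub[of "\<lambda>k. g (s k) (d i)"] by blast
    have "\<bar>g n (d i)\<bar> \<le> B * norm (d i)" for n
    proof -
      have "\<bar>g n (d i)\<bar> \<le> norm (g n) * norm (d i)" using norm_blinfun[of "g n" "d i"] by simp
      also have "\<dots> \<le> B * norm (d i)" using g[of n] by (rule mult_right_mono) simp
      finally show ?thesis .
    qed
    then have "Bseq (\<lambda>n. g (s (f n)) (d i))" by (intro BseqI'[of _ "B * norm (d i)"]) simp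
    then have "convergent (\<lambda>n. g (s (f n)) (d i))" using f(2) by (rule Bseq_monoseq_convergent)
    then show "\<exists>r'. strict_mono r' \<and> convergent (\<lambda>k. g ((s \<circ> r') k) (d i))"
      using f(1) by (intro exI[of _ f]) simp
  qed
  have "convergent (\<lambda>k. g (diagseq k) (d i))" for i
  proof -
    have "convergent (\<lambda>k. g ((diagseq \<circ> (+) (Suc i)) k) (d i))"
    proof (rule diagseq_holds)
      fix r' :: "nat \<Rightarrow> nat" and s n
      assume "strict_mono r'" "convergent (\<lambda>k. g (s k) (d n))"
      then show "convergent (\<lambda>k. g ((s \<circ> r') k) (d n))"
        using convergent_subseq_convergent[of "\<lambda>k. g (s k) (d n)" r'] by (simp add: o_def)
    qed
    then have "convergent (\<lambda>k. g (diagseq (k + Suc i)) (d i))" by (simp add: add.commute)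
    then show ?thesis
      using convergent_ignore_initial_segment[of "\<lambda>k. g (diagseq k) (d i)" "Suc i"] by simp
  qed
  with subseq_diagseq show thesis by (rule that)
qed

lemma convergent_on_closure:
  fixes g :: "nat \<Rightarrow> ('b::real_normed_vector \<Rightarrow>\<^sub>L real)"
  assumes g: "\<And>n. norm (g n) \<le> B" and conv: "\<And>v. v \<in> A \<Longrightarrow> convergent (\<lambda>k. g k v)"
    and x: "x \<in> closure A"
  shows "convergent (\<lambda>k. g k x)"
  unfolding Cauchy_convergent_iff[symmetric]
proof (rule CauchyI)
  fix e :: real assume e: "0 < e"
  have B: "0 \<le> B" using g[of 0] norm_ge_zero[of "g 0"] by linarith
  define \<delta> where "\<delta> = e / (3 * (B + 1))"
  have \<delta>: "0 < \<delta>" "B * \<delta> \<le> e / 3"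
    using e B by (auto simp: \<delta>_def field_simps)
  obtain v where v: "v \<in> A" "dist v x < \<delta>" using x \<delta>(1) unfolding closure_approachable by blast
  have close: "\<bar>g n x - g n v\<bar> \<le> e / 3" for n
  proof -
    have "\<bar>g n x - g n v\<bar> \<le> norm (g n) * norm (x - v)"
      using norm_blinfun[of "g n" "x - v"] by (simp add: blinfun.diff_right)
    also have "\<dots> \<le> B * \<delta>"
      using g[of n] v(2) B by (intro mult_mono) (simp_all add: dist_norm norm_minus_commute)
    finally show ?thesis using \<delta>(2) by linarith
  qed
  obtain M where M: "\<forall>m\<ge>M. \<forall>n\<ge>M. norm (g m v - g n v) < e / 3"
    using conv[OF v(1)] e unfolding Cauchy_convergent_iff[symmetric] Cauchy_iff
    by (meson divide_pos_pos zero_less_numeral)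
  show "\<exists>M. \<forall>m\<ge>M. \<forall>n\<ge>M. norm (g m x - g n x) < e"
  proof (intro exI allI impI)
    fix m n assume "M \<le> m" "M \<le> n"
    then have "\<bar>g m v - g n v\<bar> < e / 3" using M by simp
    then show "norm (g m x - g n x) < e"
      using close[of m] close[of n] unfolding real_norm_def abs_le_iff abs_less_iff by linarith
  qed
qed

lemma pointwise_limit_blinfun:
  fixes g :: "nat \<Rightarrow> ('b::real_normed_vector \<Rightarrow>\<^sub>L real)"
  assumes g: "\<And>n. norm (g n) \<le> B" and conv: "\<And>y. convergent (\<lambda>k. g k y)"
  obtains h :: "'b \<Rightarrow>\<^sub>L real" where "\<And>y. (\<lambda>k. g k y) \<longlonglongrightarrow> h y"
proof -
  define h where "h y = lim (\<lambda>k. g k y)" for y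
  have h: "(\<lambda>k. g k y) \<longlonglongrightarrow> h y" for y
    unfolding h_def using conv convergent_LIMSEQ_iff by blast
  have "bounded_linear h"
  proof (rule bounded_linear_intro[of _ B])
    show "h (x + y) = h x + h y" for x y
      using tendsto_add[OF h[of x] h[of y]] h[of "x + y"] LIMSEQ_unique
      by (simp add: blinfun.add_right)
    show "h (c *\<^sub>R x) = c *\<^sub>R h x" for c x
      using tendsto_mult_left[OF h[of x], of c] h[of "c *\<^sub>R x"] LIMSEQ_unique
      by (fastforce simp: blinfun.scaleR_right)
    show "norm (h x) \<le> norm x * B" for x
    proof (rule LIMSEQ_le_const2[OF tendsto_norm[OF h[of x]]])
      have "norm (g n x) \<le> norm x * B" for n
        using norm_blinfun[of "g n" x] mult_left_mono[OF g[of n] norm_ge_zero[of x]]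
        by (simp add: mult.commute)
      then show "\<exists>N. \<forall>n\<ge>N. norm (g n x) \<le> norm x * B" by blast
    qed
  qed
  then have "\<And>y. (\<lambda>k. g k y) \<longlonglongrightarrow> Blinfun h y" using h by (simp add: bounded_linear_Blinfun_apply)
  then show thesis by (rule that)
qed

text \<open>The closed span V of a countable sequence norming the closed span of the g n is separable.
  By reflexivity every point acts on the g n like a point of V, and on a countable dense subset
  of V a diagonal subsequence converges.\<close>

theorem reflexive_dual_weak_star_convergent_subseq:
  fixes g :: "nat \<Rightarrow> ('b::real_normed_vector \<Rightarrow>\<^sub>L real)"
  assumes refl: "reflexive_space TYPE('b)" and g: "\<And>n. norm (g n) \<le> B"
  obtains r and h :: "'b \<Rightarrow>\<^sub>L real" where "strict_mono r" "\<And>y. (\<lambda>k. g (r k) y) \<longlonglongrightarrow> h y"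
proof -
  obtain u :: "nat \<Rightarrow> 'b" where u: "\<forall>n. norm (u n) \<le> 1"
    and u_norming: "\<forall>z\<in>closure (rat_span g). \<forall>e>0. \<exists>n. norm z - e \<le> blinfun_apply z (u n)"
    using countable_norming_sequence[OF countable_rat_span[of g]] by blast
  define Z where "Z = closure (rat_span g)"
  define V where "V = closure (rat_span u)"
  have VZ: "subspace V" "closed V" "subspace Z"
    unfolding V_def Z_def by (simp_all add: subspace_closure_rat_span)
  have V_norming: "\<exists>v\<in>V. norm v \<le> 1 \<and> norm z - e \<le> blinfun_apply z v"
    if z: "z \<in> Z" and e: "0 < e" for z e
  proof -
    obtain n where "norm z - e \<le> blinfun_apply z (u n)" using u_norming z e unfolding Z_def by blast
    moreover have "u n \<in> V" unfolding V_def using generator_in_rat_span closure_subset by blast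
    ultimately show ?thesis using u by blast
  qed
  have g_Z: "g n \<in> Z" for n
    unfolding Z_def using generator_in_rat_span closure_subset by blast
  have represent: "\<exists>v\<in>V. \<forall>n. g n v = g n y" for y
    using reflexive_norming_subspace_represents[OF refl VZ V_norming, where y = y] g_Z by blast
  define d where "d = from_nat_into (rat_span u)"
  obtain r where r: "strict_mono r" "\<And>i. convergent (\<lambda>k. g (r k) (d i))"
    by (rule diagonal_subsequence_convergent[where g = g and d = d, OF g]) (rule that)
  have conv_V: "convergent (\<lambda>k. g (r k) v)" if "v \<in> V" for v
  proof (rule convergent_on_closure[of _ B "rat_span u"])
    fix q assume "q \<in> rat_span u"
    then obtain i where "d i = q" using from_nat_into_surj[OF countable_rat_span] d_def by metis
    then show "convergent (\<lambda>k. g (r k) q)" using r(2) by blast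
  qed (use g that V_def in simp_all)
  have "convergent (\<lambda>k. g (r k) y)" for y
  proof -
    obtain v where "v \<in> V" "\<forall>n. g n v = g n y" using represent by blast
    then show ?thesis using conv_V[of v] by simp
  qed
  then obtain h :: "'b \<Rightarrow>\<^sub>L real" where "\<And>y. (\<lambda>k. g (r k) y) \<longlonglongrightarrow> h y"
    using pointwise_limit_blinfun[of "\<lambda>k. g (r k)" B] g by blast
  with r(1) show thesis by (rule that)
qed

lemma weakly_null_subseq:
  assumes "weakly_null x" "strict_mono s"
  shows "weakly_null (x \<circ> s)"
  unfolding weakly_null_def
proof
  fix f :: "'a \<Rightarrow>\<^sub>L real"
  have "(\<lambda>n. blinfun_apply f (x n)) \<longlonglongrightarrow> 0" using assms(1) unfolding weakly_null_def by blast
  from LIMSEQ_subseq_LIMSEQ[OF this assms(2)] show "(\<lambda>n. blinfun_apply f ((x \<circ> s) n)) \<longlonglongrightarrow> 0"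
    by (simp add: o_def)
qed

theorem weak_Dunford_Pettis_reflexive_norm_null:
  fixes T :: "'a::real_normed_vector \<Rightarrow>\<^sub>L 'b::real_normed_vector"
  assumes refl: "reflexive_space TYPE('b)" and wdp: "weak_Dunford_Pettis T" and x: "weakly_null x"
  shows "(\<lambda>n. norm (T (x n))) \<longlonglongrightarrow> 0"
proof (rule ccontr)
  assume "\<not> ?thesis"
  then obtain e where e: "0 < e" and frequent: "\<forall>N. \<exists>n\<ge>N. e \<le> norm (T (x n))"
    unfolding LIMSEQ_def dist_real_def by (auto simp: not_less)
  then have "infinite {n. e \<le> norm (T (x n))}"
    unfolding infinite_nat_iff_unbounded_le by blast
  then obtain \<sigma> :: "nat \<Rightarrow> nat" where \<sigma>: "strict_mono \<sigma>" and big: "\<And>k. e \<le> norm (T (x (\<sigma> k)))"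
    using infinite_enumerate by blast
  have "\<forall>k. \<exists>f::'b \<Rightarrow>\<^sub>L real. f (T (x (\<sigma> k))) = norm (T (x (\<sigma> k))) \<and> (\<forall>y. \<bar>f y\<bar> \<le> norm y)"
    using norming_functional by blast
  then obtain g :: "nat \<Rightarrow> ('b \<Rightarrow>\<^sub>L real)"
    where g: "\<And>k. g k (T (x (\<sigma> k))) = norm (T (x (\<sigma> k)))" "\<And>k y. \<bar>g k y\<bar> \<le> norm y"
    by metis
  have g_norm: "norm (g k) \<le> 1" for k using g(2) by (intro norm_blinfun_bound) auto
  obtain r and h :: "'b \<Rightarrow>\<^sub>L real"
    where r: "strict_mono r" and conv: "\<And>y. (\<lambda>k. g (r k) y) \<longlonglongrightarrow> h y"
    by (rule reflexive_dual_weak_star_convergent_subseq[OF refl, of g 1, OF g_norm]) (rule that)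
  define x' where "x' = x \<circ> (\<sigma> \<circ> r)"
  have x': "weakly_null x'"
    unfolding x'_def by (rule weakly_null_subseq[OF x strict_mono_o[OF \<sigma> r]])
  have "weakly_null (\<lambda>k. g (r k) - h)"
    unfolding weakly_null_def
  proof
    fix \<Phi> :: "('b \<Rightarrow>\<^sub>L real) \<Rightarrow>\<^sub>L real"
    obtain y where y: "\<And>f. \<Phi> f = f y" using refl unfolding reflexive_space_def by blast
    show "(\<lambda>k. \<Phi> (g (r k) - h)) \<longlonglongrightarrow> 0"
      using tendsto_diff[OF conv[of y] tendsto_const[of "h y"]] by (simp add: y blinfun.diff_left)
  qed
  then have "(\<lambda>k. (g (r k) - h) (T (x' k))) \<longlonglongrightarrow> 0"
    using wdp x' unfolding weak_Dunford_Pettis_def by blast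
  moreover have "(\<lambda>k. (h o\<^sub>L T) (x' k)) \<longlonglongrightarrow> 0"
    using x' unfolding weakly_null_def by blast
  ultimately have "(\<lambda>k. (g (r k) - h) (T (x' k)) + (h o\<^sub>L T) (x' k)) \<longlonglongrightarrow> 0 + 0"
    by (rule tendsto_add)
  then have "(\<lambda>k. norm (T (x (\<sigma> (r k))))) \<longlonglongrightarrow> 0"
    using g(1) by (simp add: x'_def blinfun.diff_left)
  then have "e \<le> 0" using big by (intro LIMSEQ_le_const) auto
  then show False using e by simp
qed

context banach_lattice
begin

subclass lattice_ab_group_add ..

end

lemma scaleR_inf_distrib:
  fixes a b :: "'a::banach_lattice"
  assumes c: "0 \<le> c"
  shows "c *\<^sub>R inf a b = inf (c *\<^sub>R a) (c *\<^sub>R b)"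
proof (cases "c = 0")
  case True then show ?thesis by simp
next
  case False
  hence cp: "c > 0" using c by simp
  have "c *\<^sub>R inf a b \<le> inf (c *\<^sub>R a) (c *\<^sub>R b)"
    using c by (simp add: scaleR_left_mono)
  moreover have "inf (c *\<^sub>R a) (c *\<^sub>R b) \<le> c *\<^sub>R inf a b"
  proof -
    have "(1/c) *\<^sub>R inf (c *\<^sub>R a) (c *\<^sub>R b) \<le> (1/c) *\<^sub>R (c *\<^sub>R a)"
      using cp by (intro scaleR_left_mono) auto
    moreover have "(1/c) *\<^sub>R inf (c *\<^sub>R a) (c *\<^sub>R b) \<le> (1/c) *\<^sub>R (c *\<^sub>R b)"
      using cp by (intro scaleR_left_mono) auto
    ultimately have "(1/c) *\<^sub>R inf (c *\<^sub>R a) (c *\<^sub>R b) \<le> inf a b" using cp by simp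
    hence "c *\<^sub>R ((1/c) *\<^sub>R inf (c *\<^sub>R a) (c *\<^sub>R b)) \<le> c *\<^sub>R inf a b"
      using c by (rule scaleR_left_mono)
    then show ?thesis using cp by simp
  qed
  ultimately show ?thesis by (rule antisym)
qed

lemma scaleR_sup_distrib:
  fixes a b :: "'a::banach_lattice"
  assumes c: "0 \<le> c"
  shows "c *\<^sub>R sup a b = sup (c *\<^sub>R a) (c *\<^sub>R b)"
proof -
  have "sup a b = - inf (-a) (-b)" by (rule sup_eq_neg_inf)
  hence "c *\<^sub>R sup a b = c *\<^sub>R (- inf (-a) (-b))" by (rule arg_cong)
  also have "\<dots> = - (c *\<^sub>R inf (-a) (-b))" by (rule scaleR_minus_right)
  also have "\<dots> = - inf (c *\<^sub>R (-a)) (c *\<^sub>R (-b))" by (simp only: scaleR_inf_distrib[OF c])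
  also have "\<dots> = - inf (-(c *\<^sub>R a)) (-(c *\<^sub>R b))" by (simp only: scaleR_minus_right)
  also have "\<dots> = sup (c *\<^sub>R a) (c *\<^sub>R b)" by (rule sup_eq_neg_inf[symmetric])
  finally show ?thesis .
qed

lemma pprt_scaleR:
  fixes a :: "'a::banach_lattice"
  assumes "0 \<le> c" shows "pprt (c *\<^sub>R a) = c *\<^sub>R pprt a"
  unfolding pprt_def using scaleR_sup_distrib[OF assms, of a 0] by simp

lemma pprt_diff_pprt_neg: "pprt x - pprt (- x) = (x::'a::banach_lattice)"
  using prts[of x] by (simp add: pprt_neg)

lemma lmod_ge: "x \<le> lmod (x::'a::banach_lattice)" "- x \<le> lmod x"
  unfolding lmod_def by simp_all

lemma lmod_nonneg: "0 \<le> lmod (x::'a::banach_lattice)"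
proof -
  have "x + (- x) \<le> lmod x + lmod x" using lmod_ge by (rule add_mono)
  then show ?thesis by simp
qed

lemma lmod_eq_self: "0 \<le> (x::'a::banach_lattice) \<Longrightarrow> lmod x = x"
  unfolding lmod_def by (rule sup_absorb1) (meson neg_le_0_iff_le order_trans)

lemma lmod_minus: "lmod (- x) = lmod (x::'a::banach_lattice)"
  unfolding lmod_def by (simp add: sup_commute)

lemma pprt_le_lmod: "pprt x \<le> lmod (x::'a::banach_lattice)"
  unfolding pprt_def by (rule sup_least[OF lmod_ge(1) lmod_nonneg])

lemma norm_le_if_lmod_le: "lmod a \<le> lmod b \<Longrightarrow> norm a \<le> norm (b::'a::banach_lattice)"
  by (rule lattice_norm_mono) (simp add: lmod_def)

lemma norm_lmod: "norm (lmod (x::'a::banach_lattice)) = norm x"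
  using norm_le_if_lmod_le[of x "lmod x"] norm_le_if_lmod_le[of "lmod x" x]
  by (simp add: lmod_eq_self[OF lmod_nonneg])

lemma norm_mono_nonneg: "0 \<le> a \<Longrightarrow> a \<le> b \<Longrightarrow> norm a \<le> norm (b::'a::banach_lattice)"
  by (rule norm_le_if_lmod_le) (metis lmod_eq_self order_trans)

lemma norm_pprt_le: "norm (pprt x) \<le> norm (x::'a::banach_lattice)"
  using norm_mono_nonneg[OF zero_le_pprt pprt_le_lmod, of x] by (simp add: norm_lmod)

lemma norm_pprt_diff_le: "norm (pprt a - pprt b) \<le> norm (a - (b::'a::banach_lattice))"
proof -
  have pprt_diff_le: "pprt x - pprt y \<le> lmod (x - y)" for x y :: 'a
  proof -
    have "x = y + (x - y)" by simp
    also have "\<dots> \<le> pprt y + pprt (x - y)" by (intro add_mono) (simp_all add: pprt_def)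
    finally have "pprt x \<le> pprt y + pprt (x - y)"
      unfolding pprt_def[of x] by (rule sup_least) simp
    then have "pprt x - pprt y \<le> pprt (x - y)" by (metis add.commute diff_le_eq)
    then show ?thesis using pprt_le_lmod by (rule order_trans)
  qed
  have "- (pprt a - pprt b) \<le> lmod (a - b)"
    using pprt_diff_le[of b a] lmod_minus[of "a - b"] by simp
  then have "lmod (pprt a - pprt b) \<le> lmod (a - b)"
    unfolding lmod_def[of "pprt a - pprt b"] using pprt_diff_le[of a b] by (rule sup_least[rotated])
  then show ?thesis by (rule norm_le_if_lmod_le)
qed

lemma closed_nonneg: "closed {x::'a::banach_lattice. 0 \<le> x}"
proof -
  have "0 \<le> x \<longleftrightarrow> pprt (- x) = 0" for x :: 'a
    unfolding pprt_neg neg_equal_0_iff_equal by (rule zero_le_iff_zero_nprt)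
  then have eq: "{x::'a. 0 \<le> x} = {x. pprt (- x) = 0}" by blast
  have "continuous_on UNIV (\<lambda>x::'a. pprt (- x))"
    unfolding continuous_on_iff
  proof (intro ballI allI impI)
    fix x :: 'a and e :: real assume e: "0 < e"
    show "\<exists>d>0. \<forall>y\<in>UNIV. dist y x < d \<longrightarrow> dist (pprt (- y)) (pprt (- x)) < e"
    proof (intro exI[of _ e] conjI ballI impI)
      fix y :: 'a assume "dist y x < e"
      moreover have "dist (pprt (- y)) (pprt (- x)) \<le> dist y x"
        unfolding dist_norm using norm_pprt_diff_le[of "- y" "- x"] by (simp add: norm_minus_commute)
      ultimately show "dist (pprt (- y)) (pprt (- x)) < e" by simp
    qed (use e in simp)
  qed
  then show ?thesis unfolding eq by (rule closed_Collect_eq) (rule continuous_on_const)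
qed

lemma suminf_upper_nonneg:
  fixes a :: "nat \<Rightarrow> 'a::banach_lattice"
  assumes "summable a" and a_nonneg: "\<And>k. 0 \<le> a k"
  shows "a j \<le> suminf a"
proof -
  have lim: "(\<lambda>N. (\<Sum>k<N. a k) - a j) \<longlonglongrightarrow> suminf a - a j"
    using summable_LIMSEQ[OF assms(1)] by (intro tendsto_diff) auto
  have ev: "\<forall>\<^sub>F N in sequentially. (\<Sum>k<N. a k) - a j \<in> {x. 0 \<le> x}"
  proof (rule eventually_sequentiallyI[of "Suc j"])
    fix N assume "Suc j \<le> N"
    then have "(\<Sum>k<N. a k) = a j + (\<Sum>k\<in>{..<N} - {j}. a k)" by (intro sum.remove) auto
    then show "(\<Sum>k<N. a k) - a j \<in> {x. 0 \<le> x}" by (simp add: sum_nonneg a_nonneg)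
  qed
  have "suminf a - a j \<in> {x. 0 \<le> x}"
    by (rule Lim_in_closed_set[OF closed_nonneg ev _ lim]) simp
  then show ?thesis by simp
qed

lemma dual_le_0_iff: "dual_le 0 f \<longleftrightarrow> (\<forall>x. 0 \<le> x \<longrightarrow> 0 \<le> f x)"
  unfolding dual_le_def by simp

lemma dual_nonneg_mono:
  assumes "dual_le 0 f" "a \<le> b"
  shows "f a \<le> f b"
  using assms unfolding dual_le_0_iff by (metis blinfun.diff_right diff_ge_0_iff_ge)

lemma dual_nonneg_abs_le:
  assumes "dual_le 0 f"
  shows "\<bar>f x\<bar> \<le> f (lmod x)"
proof -
  have "f x \<le> f (lmod x)" by (rule dual_nonneg_mono[OF assms lmod_ge(1)])
  moreover have "f (- x) \<le> f (lmod x)" by (rule dual_nonneg_mono[OF assms lmod_ge(2)])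
  ultimately show ?thesis by (simp add: blinfun.minus_right)
qed

lemma pprt_add_rearrange:
  fixes x y :: "'a::banach_lattice"
  shows "pprt (x + y) + pprt (- x) + pprt (- y) = pprt x + pprt y + pprt (- (x + y))"
  using pprt_diff_pprt_neg[of x] pprt_diff_pprt_neg[of y] pprt_diff_pprt_neg[of "x + y"]
  by (simp add: algebra_simps)

lemma nonneg_additive_extends_to_blinfun:
  fixes p :: "'a::banach_lattice \<Rightarrow> real"
  assumes add: "\<And>x y. 0 \<le> x \<Longrightarrow> 0 \<le> y \<Longrightarrow> p (x + y) = p x + p y"
    and hom: "\<And>c x. 0 \<le> c \<Longrightarrow> 0 \<le> x \<Longrightarrow> p (c *\<^sub>R x) = c * p x"
    and bound: "\<And>x. 0 \<le> x \<Longrightarrow> 0 \<le> p x \<and> p x \<le> K * norm x"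
    and K: "0 \<le> K"
  obtains \<phi> :: "'a \<Rightarrow>\<^sub>L real" where "dual_le 0 \<phi>" "\<And>x. 0 \<le> x \<Longrightarrow> \<phi> x = p x"
proof -
  define \<phi> where "\<phi> x = p (pprt x) - p (pprt (- x))" for x
  have "\<phi> (x + y) = \<phi> x + \<phi> y" for x y
  proof -
    have "p (pprt (x + y) + pprt (- x) + pprt (- y)) = p (pprt (x + y)) + p (pprt (- x)) + p (pprt (- y))"
      and "p (pprt x + pprt y + pprt (- (x + y))) = p (pprt x) + p (pprt y) + p (pprt (- (x + y)))"
      using add by (simp_all add: add_nonneg_nonneg)
    then show ?thesis unfolding \<phi>_def using pprt_add_rearrange[of x y] by simp
  qed
  moreover have "\<phi> (c *\<^sub>R x) = c * \<phi> x" for c x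
  proof (cases "0 \<le> c")
    case True
    then show ?thesis
      unfolding \<phi>_def using pprt_scaleR[OF True, of x] pprt_scaleR[OF True, of "- x"] hom[OF True]
      by (simp add: algebra_simps)
  next
    case False
    then have c: "0 \<le> - c" by simp
    have "pprt (c *\<^sub>R x) = (- c) *\<^sub>R pprt (- x)" "pprt (- (c *\<^sub>R x)) = (- c) *\<^sub>R pprt x"
      using pprt_scaleR[OF c, of "- x"] pprt_scaleR[OF c, of x] by simp_all
    then show ?thesis unfolding \<phi>_def using hom[OF c] by (simp add: algebra_simps)
  qed
  moreover have "\<bar>\<phi> x\<bar> \<le> K * norm x" for x
  proof -
    have "0 \<le> p (pprt x)" "p (pprt x) \<le> K * norm x"
      using bound[OF zero_le_pprt[of x]] norm_pprt_le[of x] K by (auto intro: order_trans mult_left_mono)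
    moreover have "0 \<le> p (pprt (- x))" "p (pprt (- x)) \<le> K * norm x"
      using bound[OF zero_le_pprt[of "- x"]] norm_pprt_le[of "- x"] K
      by (auto intro: order_trans mult_left_mono)
    ultimately show ?thesis unfolding \<phi>_def by (simp add: abs_le_iff)
  qed
  ultimately have "bounded_linear \<phi>"
    by (intro bounded_linear_intro[of _ K]) (auto simp: mult.commute)
  moreover have "\<phi> x = p x" if "0 \<le> x" for x
    using that hom[of 0 0] by (simp add: \<phi>_def pprt_eq_0)
  ultimately show thesis
    using that[of "Blinfun \<phi>"] bound by (simp add: bounded_linear_Blinfun_apply dual_le_0_iff)
qed

lemma diff_pprt_diff_eq_inf: "a - pprt (a - b) = inf a (b::'a::banach_lattice)"
proof -
  have "a - pprt (a - b) = a + inf (b - a) 0"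
    unfolding pprt_def by (simp add: diff_sup_eq_inf)
  also have "\<dots> = inf (a + (b - a)) (a + 0)" by (rule add_inf_distrib_left)
  finally show ?thesis by (simp add: inf_commute)
qed

definition pos_part_functional :: "('a::banach_lattice \<Rightarrow>\<^sub>L real) \<Rightarrow> 'a \<Rightarrow> real" where
  "pos_part_functional f x = Sup {f z | z. 0 \<le> z \<and> z \<le> x}"

lemma pos_part_functional_upper:
  fixes f :: "'a::banach_lattice \<Rightarrow>\<^sub>L real"
  assumes "0 \<le> z" "z \<le> x"
  shows "f z \<le> pos_part_functional f x"
  unfolding pos_part_functional_def
proof (rule cSup_upper)
  have "f z' \<le> norm f * norm x" if "0 \<le> z'" "z' \<le> x" for z'
    using norm_blinfun[of f z'] mult_left_mono[OF norm_mono_nonneg[OF that] norm_ge_zero[of f]]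
    by simp
  then show "bdd_above {f z | z. 0 \<le> z \<and> z \<le> x}" unfolding bdd_above_def by blast
qed (use assms in blast)

lemma pos_part_functional_least:
  fixes f :: "'a::banach_lattice \<Rightarrow>\<^sub>L real"
  assumes "0 \<le> x" "\<And>z. 0 \<le> z \<Longrightarrow> z \<le> x \<Longrightarrow> f z \<le> B"
  shows "pos_part_functional f x \<le> B"
  unfolding pos_part_functional_def by (rule cSup_least) (use assms in blast)+

lemma pos_part_functional_add:
  fixes f :: "'a::banach_lattice \<Rightarrow>\<^sub>L real"
  assumes x: "0 \<le> x" and y: "0 \<le> y"
  shows "pos_part_functional f (x + y) = pos_part_functional f x + pos_part_functional f y"
proof (rule antisym)
  show "pos_part_functional f (x + y) \<le> pos_part_functional f x + pos_part_functional f y"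
  proof (rule pos_part_functional_least)
    fix z assume z: "0 \<le> z" "z \<le> x + y"
    have "z = inf z x + pprt (z - x)" using diff_pprt_diff_eq_inf[of z x] by (simp add: algebra_simps)
    then have "f z = f (inf z x) + f (pprt (z - x))" by (metis blinfun.add_right)
    also have "f (inf z x) \<le> pos_part_functional f x"
      using z x by (intro pos_part_functional_upper) simp_all
    also have "f (pprt (z - x)) \<le> pos_part_functional f y"
      using z y unfolding pprt_def by (intro pos_part_functional_upper) (simp_all add: diff_le_eq add.commute)
    finally show "f z \<le> pos_part_functional f x + pos_part_functional f y" by simp
  qed (use x y in simp)
next
  have "pos_part_functional f x \<le> pos_part_functional f (x + y) - pos_part_functional f y"
  proof (rule pos_part_functional_least[OF x])
    fix z1 assume z1: "0 \<le> z1" "z1 \<le> x"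
    have "pos_part_functional f y \<le> pos_part_functional f (x + y) - f z1"
    proof (rule pos_part_functional_least[OF y])
      fix z2 assume z2: "0 \<le> z2" "z2 \<le> y"
      have "f (z1 + z2) \<le> pos_part_functional f (x + y)"
        using z1 z2 by (intro pos_part_functional_upper) (simp_all add: add_mono)
      then show "f z2 \<le> pos_part_functional f (x + y) - f z1" by (simp add: blinfun.add_right)
    qed
    then show "f z1 \<le> pos_part_functional f (x + y) - pos_part_functional f y" by simp
  qed
  then show "pos_part_functional f x + pos_part_functional f y \<le> pos_part_functional f (x + y)"
    by simp
qed

lemma pos_part_functional_scaleR:
  fixes f :: "'a::banach_lattice \<Rightarrow>\<^sub>L real"
  assumes c: "0 \<le> c" and x: "0 \<le> x"
  shows "pos_part_functional f (c *\<^sub>R x) = c * pos_part_functional f x"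
proof (cases "c = 0")
  case True
  have "pos_part_functional f 0 \<le> 0"
    by (rule pos_part_functional_least) (auto dest: antisym)
  moreover have "0 \<le> pos_part_functional f 0" using pos_part_functional_upper[of 0 0 f] by simp
  ultimately have "pos_part_functional f 0 = 0" by (rule antisym)
  then show ?thesis using True by simp
next
  case False
  then have c_pos: "0 < c" using c by simp
  have cx: "0 \<le> c *\<^sub>R x" using c x by (rule scaleR_nonneg_nonneg)
  show ?thesis
  proof (rule antisym)
    show "pos_part_functional f (c *\<^sub>R x) \<le> c * pos_part_functional f x"
    proof (rule pos_part_functional_least[OF cx])
      fix z assume z: "0 \<le> z" "z \<le> c *\<^sub>R x"
      have "0 \<le> (1 / c) *\<^sub>R z" "(1 / c) *\<^sub>R z \<le> x"
        using z c_pos scaleR_left_mono[OF z(2), of "1 / c"] by (simp_all add: scaleR_nonneg_nonneg)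
      then have "f ((1 / c) *\<^sub>R z) \<le> pos_part_functional f x" by (rule pos_part_functional_upper)
      then have "(1 / c) * f z \<le> pos_part_functional f x" by (simp add: blinfun.scaleR_right)
      then show "f z \<le> c * pos_part_functional f x" using c_pos by (simp add: field_simps)
    qed
  next
    have "pos_part_functional f x \<le> pos_part_functional f (c *\<^sub>R x) / c"
    proof (rule pos_part_functional_least[OF x])
      fix z assume z: "0 \<le> z" "z \<le> x"
      have "f (c *\<^sub>R z) \<le> pos_part_functional f (c *\<^sub>R x)"
        using z c by (intro pos_part_functional_upper) (simp_all add: scaleR_left_mono scaleR_nonneg_nonneg)
      then show "f z \<le> pos_part_functional f (c *\<^sub>R x) / c"
        using c_pos by (simp add: blinfun.scaleR_right field_simps)
    qed
    then show "c * pos_part_functional f x \<le> pos_part_functional f (c *\<^sub>R x)"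
      using c_pos by (simp add: field_simps)
  qed
qed

lemma blinfun_eq_diff_nonneg:
  fixes f :: "'a::banach_lattice \<Rightarrow>\<^sub>L real"
  obtains f1 f2 where "dual_le 0 f1" "dual_le 0 f2" "\<And>x. f x = f1 x - f2 x"
proof -
  have bound: "0 \<le> pos_part_functional f x \<and> pos_part_functional f x \<le> norm f * norm x"
    if "0 \<le> x" for x
  proof
    show "0 \<le> pos_part_functional f x" using pos_part_functional_upper[of 0 x f] that by simp
    show "pos_part_functional f x \<le> norm f * norm x"
    proof (rule pos_part_functional_least[OF that])
      fix z assume "0 \<le> z" "z \<le> x"
      then have "norm f * norm z \<le> norm f * norm x"
        by (intro mult_left_mono norm_mono_nonneg) simp_all
      then show "f z \<le> norm f * norm x" using norm_blinfun[of f z] by simp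
    qed
  qed
  obtain f1 :: "'a \<Rightarrow>\<^sub>L real" where f1: "dual_le 0 f1"
    and f1_eq: "\<And>x. 0 \<le> x \<Longrightarrow> f1 x = pos_part_functional f x"
    using nonneg_additive_extends_to_blinfun[OF pos_part_functional_add[where f = f]
        pos_part_functional_scaleR[where f = f] bound norm_ge_zero[of f]] by blast
  have "dual_le 0 (f1 - f)"
    unfolding dual_le_0_iff using f1_eq pos_part_functional_upper[of _ _ f]
    by (simp add: blinfun.diff_left)
  with f1 show thesis by (rule that) (simp add: blinfun.diff_left)
qed

section \<open>Order continuity of the dual norm and disjoint sequences\<close>

lemma inf_add_le_add_inf:
  fixes x a b :: "'a::banach_lattice"
  assumes "0 \<le> x" "0 \<le> a" "0 \<le> b"
  shows "inf x (a + b) \<le> inf x a + inf x b"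
proof -
  have "inf x a + inf x b = inf (x + inf x b) (a + inf x b)" by (rule add_inf_distrib_right)
  also have "\<dots> = inf (inf (x + x) (x + b)) (inf (a + x) (a + b))"
    by (simp add: add_inf_distrib_left)
  finally have e: "inf x a + inf x b = inf (inf (x + x) (x + b)) (inf (a + x) (a + b))" .
  have "inf x (a + b) \<le> x + x" using assms by (meson add_increasing inf.coboundedI1 order_refl)
  moreover have "inf x (a + b) \<le> x + b" using assms by (meson add_increasing2 inf.coboundedI1 order_refl)
  moreover have "inf x (a + b) \<le> a + x" using assms by (meson add_increasing inf.coboundedI1 order_refl)
  moreover have "inf x (a + b) \<le> a + b" by simp
  ultimately show ?thesis unfolding e by simp
qed

lemma inf_sum_le_sum_inf:
  fixes x :: "'a::banach_lattice"
  assumes x: "0 \<le> x" and fin: "finite I" and a: "\<And>i. i \<in> I \<Longrightarrow> 0 \<le> a i"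
  shows "inf x (\<Sum>i\<in>I. a i) \<le> (\<Sum>i\<in>I. inf x (a i))"
  using fin a
proof (induction I rule: finite_induct)
  case empty
  then show ?case using x by (simp add: inf_absorb2)
next
  case (insert j I)
  have "0 \<le> (\<Sum>i\<in>I. a i)" using insert.prems by (intro sum_nonneg) simp
  then have "inf x (a j + (\<Sum>i\<in>I. a i)) \<le> inf x (a j) + inf x (\<Sum>i\<in>I. a i)"
    using x insert.prems by (intro inf_add_le_add_inf) simp_all
  also have "\<dots> \<le> inf x (a j) + (\<Sum>i\<in>I. inf x (a i))"
    using insert.IH insert.prems by (simp add: add_left_mono)
  finally show ?case using insert.hyps by simp
qed

lemma disjoint_sum_le:
  fixes x :: "'a::banach_lattice"
  assumes fin: "finite I" and a_nonneg: "\<And>i. 0 \<le> a i"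
    and disj: "\<And>i j. i \<noteq> j \<Longrightarrow> inf (a i) (a j) = 0"
    and a_le: "\<And>i. a i \<le> x" and x: "0 \<le> x"
  shows "(\<Sum>i\<in>I. a i) \<le> x"
  using fin
proof (induction I rule: finite_induct)
  case empty
  then show ?case using x by simp
next
  case (insert j I)
  have "inf (a j) (\<Sum>i\<in>I. a i) \<le> (\<Sum>i\<in>I. inf (a j) (a i))"
    using a_nonneg insert.hyps(1) by (intro inf_sum_le_sum_inf) simp_all
  also have "\<dots> = 0"
  proof (rule sum.neutral, rule ballI)
    fix i assume "i \<in> I"
    then have "j \<noteq> i" using insert.hyps(2) by blast
    then show "inf (a j) (a i) = 0" by (rule disj)
  qed
  finally have "inf (a j) (\<Sum>i\<in>I. a i) = 0"
    using a_nonneg insert.hyps(1) by (intro antisym) (simp_all add: sum_nonneg)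
  then have "a j + (\<Sum>i\<in>I. a i) = sup (a j) (\<Sum>i\<in>I. a i)"
    using add_eq_inf_sup[of "a j" "\<Sum>i\<in>I. a i"] by simp
  also have "\<dots> \<le> x" using a_le insert.IH by simp
  finally show ?case using insert.hyps by simp
qed

text \<open>For positive f and a cone C of positive elements: the component of f in the band
  generated by C.\<close>

definition component_functional :: "('a::banach_lattice \<Rightarrow>\<^sub>L real) \<Rightarrow> 'a set \<Rightarrow> 'a \<Rightarrow> real" where
  "component_functional f C x = Sup {f (inf x s) | s. s \<in> C}"

lemma component_functional_upper:
  assumes "dual_le 0 f" "s \<in> C"
  shows "f (inf x s) \<le> component_functional f C x"
  unfolding component_functional_def
proof (rule cSup_upper)
  show "bdd_above {f (inf x s) | s. s \<in> C}"
    unfolding bdd_above_def using dual_nonneg_mono[OF assms(1) inf_le1] by blast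
qed (use assms in blast)

lemma component_functional_least:
  fixes f :: "'a::banach_lattice \<Rightarrow>\<^sub>L real"
  assumes "C \<noteq> {}" "\<And>s. s \<in> C \<Longrightarrow> f (inf x s) \<le> B"
  shows "component_functional f C x \<le> B"
  unfolding component_functional_def by (rule cSup_least) (use assms in blast)+

lemma component_functional_add:
  fixes f :: "'a::banach_lattice \<Rightarrow>\<^sub>L real"
  assumes f: "dual_le 0 f" and C: "convex_cone C" and C_nonneg: "\<And>s. s \<in> C \<Longrightarrow> 0 \<le> s"
    and x: "0 \<le> x" and y: "0 \<le> y"
  shows "component_functional f C (x + y) = component_functional f C x + component_functional f C y"
proof (rule antisym)
  have C_ne: "C \<noteq> {}" using C by (rule convex_cone_nonempty)
  note upper = component_functional_upper[OF f]
  show "component_functional f C (x + y) \<le> component_functional f C x + component_functional f C y"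
  proof (rule component_functional_least[OF C_ne])
    fix s assume s: "s \<in> C"
    have "inf (x + y) s \<le> inf x s + inf y s"
      using inf_add_le_add_inf[OF C_nonneg[OF s] x y] by (simp add: inf_commute)
    then have "f (inf (x + y) s) \<le> f (inf x s) + f (inf y s)"
      using dual_nonneg_mono[OF f] by (simp add: blinfun.add_right[symmetric])
    also have "\<dots> \<le> component_functional f C x + component_functional f C y"
      using upper[OF s] by (rule add_mono) (rule upper[OF s])
    finally show "f (inf (x + y) s) \<le> component_functional f C x + component_functional f C y" .
  qed
next
  have C_ne: "C \<noteq> {}" using C by (rule convex_cone_nonempty)
  have "component_functional f C x \<le> component_functional f C (x + y) - component_functional f C y"
  proof (rule component_functional_least[OF C_ne])
    fix s assume s: "s \<in> C"
    have "component_functional f C y \<le> component_functional f C (x + y) - f (inf x s)"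
    proof (rule component_functional_least[OF C_ne])
      fix s' assume s': "s' \<in> C"
      define t where "t = s + s'"
      have t: "t \<in> C" "2 *\<^sub>R t \<in> C"
        using C s s' unfolding t_def by (simp_all add: convex_cone_add convex_cone_scaleR)
      have "inf x s + inf y s' \<le> inf x t + inf y t"
        using C_nonneg[OF s] C_nonneg[OF s'] unfolding t_def
        by (intro add_mono) (simp_all add: le_infI2 add_increasing add_increasing2)
      also have "\<dots> \<le> inf (x + y) (2 *\<^sub>R t)"
      proof (rule le_infI)
        show "inf x t + inf y t \<le> x + y" by (intro add_mono) simp_all
        have "inf x t + inf y t \<le> t + t" by (intro add_mono) simp_all
        then show "inf x t + inf y t \<le> 2 *\<^sub>R t" by (simp add: scaleR_2)
      qed
      finally have "f (inf x s) + f (inf y s') \<le> f (inf (x + y) (2 *\<^sub>R t))"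
        using dual_nonneg_mono[OF f] by (simp add: blinfun.add_right[symmetric])
      also have "\<dots> \<le> component_functional f C (x + y)"
        by (rule component_functional_upper[OF f t(2)])
      finally show "f (inf y s') \<le> component_functional f C (x + y) - f (inf x s)" by simp
    qed
    then show "f (inf x s) \<le> component_functional f C (x + y) - component_functional f C y" by simp
  qed
  then show "component_functional f C x + component_functional f C y \<le> component_functional f C (x + y)"
    by simp
qed

lemma component_functional_scaleR:
  fixes f :: "'a::banach_lattice \<Rightarrow>\<^sub>L real"
  assumes f: "dual_le 0 f" and C: "convex_cone C" and C_nonneg: "\<And>s. s \<in> C \<Longrightarrow> 0 \<le> s"
    and c: "0 \<le> c" and x: "0 \<le> x"
  shows "component_functional f C (c *\<^sub>R x) = c * component_functional f C x"
proof (cases "c = 0")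
  case True
  have C_ne: "C \<noteq> {}" using C by (rule convex_cone_nonempty)
  have "component_functional f C 0 \<le> 0"
    by (rule component_functional_least[OF C_ne]) (simp add: C_nonneg inf_absorb1)
  moreover have "0 \<le> component_functional f C 0"
    using component_functional_upper[OF f, of 0 C 0] C by (simp add: convex_cone_iff)
  ultimately show ?thesis using True by simp
next
  case False
  then have c_pos: "0 < c" using c by simp
  have C_ne: "C \<noteq> {}" using C by (rule convex_cone_nonempty)
  show ?thesis
  proof (rule antisym)
    show "component_functional f C (c *\<^sub>R x) \<le> c * component_functional f C x"
    proof (rule component_functional_least[OF C_ne])
      fix s assume s: "s \<in> C"
      have s': "(1 / c) *\<^sub>R s \<in> C" using C s c_pos by (simp add: convex_cone_scaleR)
      have "inf (c *\<^sub>R x) s = c *\<^sub>R inf x ((1 / c) *\<^sub>R s)"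
        using scaleR_inf_distrib[OF c, of x "(1 / c) *\<^sub>R s"] c_pos by simp
      then have "f (inf (c *\<^sub>R x) s) = c * f (inf x ((1 / c) *\<^sub>R s))"
        by (simp add: blinfun.scaleR_right)
      also have "\<dots> \<le> c * component_functional f C x"
        using component_functional_upper[OF f s'] c by (rule mult_left_mono)
      finally show "f (inf (c *\<^sub>R x) s) \<le> c * component_functional f C x" .
    qed
  next
    have "component_functional f C x \<le> component_functional f C (c *\<^sub>R x) / c"
    proof (rule component_functional_least[OF C_ne])
      fix s assume s: "s \<in> C"
      have s': "c *\<^sub>R s \<in> C" using C s c by (simp add: convex_cone_scaleR)
      have "c * f (inf x s) = f (inf (c *\<^sub>R x) (c *\<^sub>R s))"
        by (simp add: blinfun.scaleR_right flip: scaleR_inf_distrib[OF c])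
      also have "\<dots> \<le> component_functional f C (c *\<^sub>R x)" by (rule component_functional_upper[OF f s'])
      finally show "f (inf x s) \<le> component_functional f C (c *\<^sub>R x) / c"
        using c_pos by (simp add: field_simps)
    qed
    then show "c * component_functional f C x \<le> component_functional f C (c *\<^sub>R x)"
      using c_pos by (simp add: field_simps)
  qed
qed

lemma component_functional_blinfun:
  fixes f :: "'a::banach_lattice \<Rightarrow>\<^sub>L real"
  assumes f: "dual_le 0 f" and C: "convex_cone C" and C_nonneg: "\<And>s. s \<in> C \<Longrightarrow> 0 \<le> s"
  obtains \<phi> :: "'a \<Rightarrow>\<^sub>L real"
  where "dual_le 0 \<phi>" "\<And>x. 0 \<le> x \<Longrightarrow> \<phi> x = component_functional f C x"
proof -
  have bound: "0 \<le> component_functional f C x \<and> component_functional f C x \<le> norm f * norm x"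
    if x: "0 \<le> x" for x
  proof
    have "0 \<in> C" using C by (simp add: convex_cone_iff)
    then show "0 \<le> component_functional f C x"
      using component_functional_upper[OF f, of 0 C x] x by (simp add: inf_absorb2)
    show "component_functional f C x \<le> norm f * norm x"
    proof (rule component_functional_least)
      show "C \<noteq> {}" using C by (rule convex_cone_nonempty)
      fix s assume "s \<in> C"
      have "f (inf x s) \<le> f x" using dual_nonneg_mono[OF f inf_le1] .
      also have "\<dots> \<le> norm f * norm x" using norm_blinfun[of f x] by simp
      finally show "f (inf x s) \<le> norm f * norm x" .
    qed
  qed
  show thesis
    using nonneg_additive_extends_to_blinfun[OF component_functional_add[OF f C C_nonneg]
        component_functional_scaleR[OF f C C_nonneg] bound norm_ge_zero[of f]] that by blast
qed

lemma component_functional_mono: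
  fixes f :: "'a::banach_lattice \<Rightarrow>\<^sub>L real"
  assumes "dual_le 0 f" "C \<noteq> {}" "C \<subseteq> C'"
  shows "component_functional f C x \<le> component_functional f C' x"
  using assms by (intro component_functional_least component_functional_upper) auto

text \<open>The positive cone of the ideal generated by z m, z (m + 1), \<dots>\<close>

definition tail_ideal :: "(nat \<Rightarrow> 'a::banach_lattice) \<Rightarrow> nat \<Rightarrow> 'a set" where
  "tail_ideal z m = {s. 0 \<le> s \<and> (\<exists>N c. 0 \<le> c \<and> s \<le> c *\<^sub>R (\<Sum>i\<in>{m..<N}. z i))}"

lemma tail_ideal_nonneg: "s \<in> tail_ideal z m \<Longrightarrow> 0 \<le> s"
  unfolding tail_ideal_def by blast

lemma sum_tail_mono:
  fixes z :: "nat \<Rightarrow> 'a::banach_lattice"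
  assumes "\<And>k. 0 \<le> z k" "m \<le> m'" "N' \<le> N"
  shows "(\<Sum>i\<in>{m'..<N'}. z i) \<le> (\<Sum>i\<in>{m..<N}. z i)"
  using assms by (intro sum_mono2) auto

lemma convex_cone_tail_ideal:
  fixes z :: "nat \<Rightarrow> 'a::banach_lattice"
  assumes z: "\<And>k. 0 \<le> z k"
  shows "convex_cone (tail_ideal z m)"
  unfolding convex_cone_iff
proof (intro conjI ballI allI impI)
  show "0 \<in> tail_ideal z m" unfolding tail_ideal_def by (auto intro!: exI[of _ m] exI[of _ 0])
next
  fix s s' assume "s \<in> tail_ideal z m" "s' \<in> tail_ideal z m"
  then obtain N c N' c' where s: "0 \<le> s" "0 \<le> c" "s \<le> c *\<^sub>R (\<Sum>i\<in>{m..<N}. z i)"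
    and s': "0 \<le> s'" "0 \<le> c'" "s' \<le> c' *\<^sub>R (\<Sum>i\<in>{m..<N'}. z i)"
    unfolding tail_ideal_def by blast
  define N'' where "N'' = max N N'"
  have "s \<le> c *\<^sub>R (\<Sum>i\<in>{m..<N''}. z i)"
    using s sum_tail_mono[OF z order_refl, of N N''] unfolding N''_def
    by (meson max.cobounded1 order_trans scaleR_left_mono)
  moreover have "s' \<le> c' *\<^sub>R (\<Sum>i\<in>{m..<N''}. z i)"
    using s' sum_tail_mono[OF z order_refl, of N' N''] unfolding N''_def
    by (meson max.cobounded2 order_trans scaleR_left_mono)
  ultimately have "s + s' \<le> (c + c') *\<^sub>R (\<Sum>i\<in>{m..<N''}. z i)"
    by (simp add: add_mono scaleR_add_left)
  then show "s + s' \<in> tail_ideal z m"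
    unfolding tail_ideal_def using s s' by (auto intro!: exI[of _ N''] exI[of _ "c + c'"])
next
  fix s and t :: real assume "s \<in> tail_ideal z m" "0 \<le> t"
  then obtain N c where s: "0 \<le> s" "0 \<le> c" "s \<le> c *\<^sub>R (\<Sum>i\<in>{m..<N}. z i)"
    unfolding tail_ideal_def by blast
  have "t *\<^sub>R s \<le> (t * c) *\<^sub>R (\<Sum>i\<in>{m..<N}. z i)" using scaleR_left_mono[OF s(3) \<open>0 \<le> t\<close>] by simp
  then show "t *\<^sub>R s \<in> tail_ideal z m"
    unfolding tail_ideal_def using s \<open>0 \<le> t\<close>
    by (auto intro!: exI[of _ N] exI[of _ "t * c"] scaleR_nonneg_nonneg)
qed

lemma tail_ideal_antimono:
  fixes z :: "nat \<Rightarrow> 'a::banach_lattice"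
  assumes z: "\<And>k. 0 \<le> z k" and "m \<le> m'"
  shows "tail_ideal z m' \<subseteq> tail_ideal z m"
proof
  fix s assume "s \<in> tail_ideal z m'"
  then obtain N c where s: "0 \<le> s" "0 \<le> c" "s \<le> c *\<^sub>R (\<Sum>i\<in>{m'..<N}. z i)"
    unfolding tail_ideal_def by blast
  then have "s \<le> c *\<^sub>R (\<Sum>i\<in>{m..<N}. z i)"
    using sum_tail_mono[OF z \<open>m \<le> m'\<close> order_refl] by (meson order_trans scaleR_left_mono)
  then show "s \<in> tail_ideal z m" unfolding tail_ideal_def using s by blast
qed

lemma in_tail_ideal:
  fixes z :: "nat \<Rightarrow> 'a::banach_lattice"
  assumes z: "\<And>k. 0 \<le> z k" and "m \<le> k"
  shows "z k \<in> tail_ideal z m"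
proof -
  have "(\<Sum>i\<in>{k..<Suc k}. z i) \<le> (\<Sum>i\<in>{m..<Suc k}. z i)"
    using sum_tail_mono[OF z \<open>m \<le> k\<close> order_refl] .
  then have "z k \<le> 1 *\<^sub>R (\<Sum>i\<in>{m..<Suc k}. z i)" by simp
  then show ?thesis
    unfolding tail_ideal_def using z[of k] by (auto intro!: exI[of _ "Suc k"] exI[of _ "1::real"])
qed

lemma order_continuous_dual_decseq_norm:
  fixes \<phi> :: "nat \<Rightarrow> ('a::banach_lattice \<Rightarrow>\<^sub>L real)"
  assumes oc: "dual_norm_order_continuous TYPE('a)"
    and nonneg: "\<And>m. dual_le 0 (\<phi> m)" and dec: "\<And>m m'. m \<le> m' \<Longrightarrow> dual_le (\<phi> m') (\<phi> m)"
    and inf_zero: "\<And>x e. 0 \<le> x \<Longrightarrow> 0 < e \<Longrightarrow> \<exists>m. \<phi> m x \<le> e"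
    and e: "0 < e"
  shows "\<exists>m. norm (\<phi> m) < e"
proof -
  have "\<forall>f\<in>range \<phi>. \<forall>g\<in>range \<phi>. \<exists>h\<in>range \<phi>. dual_le h f \<and> dual_le h g"
    using dec by (metis max.cobounded1 max.cobounded2 rangeE rangeI)
  moreover have "dual_le g 0" if "\<forall>f\<in>range \<phi>. dual_le g f" for g
    unfolding dual_le_def
  proof (intro allI impI)
    fix x :: 'a assume "0 \<le> x"
    have "g x \<le> 0 + \<epsilon>" if "0 < \<epsilon>" for \<epsilon>
    proof -
      obtain m where "\<phi> m x \<le> \<epsilon>" using inf_zero[OF \<open>0 \<le> x\<close> \<open>0 < \<epsilon>\<close>] by blast
      moreover have "g x \<le> \<phi> m x" using \<open>\<forall>f\<in>range \<phi>. dual_le g f\<close> \<open>0 \<le> x\<close> unfolding dual_le_def by blast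
      ultimately show ?thesis by simp
    qed
    then show "g x \<le> blinfun_apply 0 x" by (simp add: field_le_epsilon)
  qed
  ultimately have "\<forall>e>0. \<exists>f\<in>range \<phi>. norm f < e"
    using oc nonneg unfolding dual_norm_order_continuous_def by blast
  then show ?thesis using e by blast
qed

lemma sum_blocks_unbounded:
  fixes F :: "real \<Rightarrow> nat \<Rightarrow> real"
  assumes mono: "\<And>c c' i. c \<le> c' \<Longrightarrow> F c i \<le> F c' i" and e: "0 < e"
    and block: "\<And>m. \<exists>N c. 0 \<le> c \<and> e < (\<Sum>i\<in>{m..<N}. F c i)"
  shows "\<exists>N c. 0 \<le> c \<and> real K * e \<le> (\<Sum>i<N. F c i)"
proof (induction K)
  case 0
  show ?case by (intro exI[of _ 0] exI[of _ 0]) simp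
next
  case (Suc K)
  then obtain N c where Nc: "0 \<le> c" "real K * e \<le> (\<Sum>i<N. F c i)" by blast
  obtain N' c' where Nc': "0 \<le> c'" "e < (\<Sum>i\<in>{N..<N'}. F c' i)" using block[of N] by blast
  have "N \<le> N'" using Nc'(2) e by (cases "N \<le> N'") auto
  define c'' where "c'' = max c c'"
  have "(\<Sum>i<N'. F c'' i) = (\<Sum>i\<in>{..<N} \<union> {N..<N'}. F c'' i)"
    using \<open>N \<le> N'\<close> by (intro sum.cong) auto
  also have "\<dots> = (\<Sum>i<N. F c'' i) + (\<Sum>i\<in>{N..<N'}. F c'' i)"
    by (rule sum.union_disjoint) auto
  finally have "(\<Sum>i<N'. F c'' i) = (\<Sum>i<N. F c'' i) + (\<Sum>i\<in>{N..<N'}. F c'' i)" .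
  moreover have "(\<Sum>i<N. F c i) \<le> (\<Sum>i<N. F c'' i)" "(\<Sum>i\<in>{N..<N'}. F c' i) \<le> (\<Sum>i\<in>{N..<N'}. F c'' i)"
    by (intro sum_mono mono; simp add: c''_def)+
  ultimately have "real (Suc K) * e \<le> (\<Sum>i<N'. F c'' i)"
    using Nc(2) Nc'(2) by (simp add: distrib_right)
  moreover have "0 \<le> c''" using Nc(1) by (simp add: c''_def)
  ultimately show ?case by blast
qed

lemma disjoint_inf_sum_le:
  fixes x :: "'a::banach_lattice"
  assumes z: "\<And>k. 0 \<le> z k" and disj: "\<And>i j. i \<noteq> j \<Longrightarrow> inf (z i) (z j) = 0"
    and x: "0 \<le> x" and c: "0 \<le> c" and "finite I"
  shows "(\<Sum>i\<in>I. inf x (c *\<^sub>R z i)) \<le> x"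
proof (rule disjoint_sum_le[OF \<open>finite I\<close>])
  show "0 \<le> inf x (c *\<^sub>R z i)" for i using x c z[of i] by (simp add: scaleR_nonneg_nonneg)
  show "inf (inf x (c *\<^sub>R z i)) (inf x (c *\<^sub>R z j)) = 0" if "i \<noteq> j" for i j
  proof (rule antisym)
    have "inf (inf x (c *\<^sub>R z i)) (inf x (c *\<^sub>R z j)) \<le> inf (c *\<^sub>R z i) (c *\<^sub>R z j)"
      by (simp add: le_infI1 le_infI2 inf.coboundedI2)
    also have "\<dots> = 0" using disj[OF that] scaleR_inf_distrib[OF c, of "z i" "z j"] by simp
    finally show "inf (inf x (c *\<^sub>R z i)) (inf x (c *\<^sub>R z j)) \<le> 0" .
    show "0 \<le> inf (inf x (c *\<^sub>R z i)) (inf x (c *\<^sub>R z j))"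
      using x c z by (simp add: scaleR_nonneg_nonneg)
  qed
qed (use x in simp_all)

text \<open>If the components of f on the tail ideals stayed above e at some x, disjoint blocks of
  the tail would each contribute more than e to f evaluated below x, which is impossible.\<close>

lemma component_tail_ideal_small:
  fixes f :: "'a::banach_lattice \<Rightarrow>\<^sub>L real"
  assumes f: "dual_le 0 f" and z: "\<And>k. 0 \<le> z k" and disj: "\<And>i j. i \<noteq> j \<Longrightarrow> inf (z i) (z j) = 0"
    and x: "0 \<le> x" and e: "0 < e"
  shows "\<exists>m. component_functional f (tail_ideal z m) x \<le> e"
proof (rule ccontr)
  assume "\<not> ?thesis"
  then have big: "e < component_functional f (tail_ideal z m) x" for m by (simp add: not_le)
  have block: "\<exists>N c. 0 \<le> c \<and> e < (\<Sum>i\<in>{m..<N}. f (inf x (c *\<^sub>R z i)))" for m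
  proof -
    have "tail_ideal z m \<noteq> {}" using convex_cone_nonempty[OF convex_cone_tail_ideal[where z = z, OF z]] .
    have "\<exists>s\<in>tail_ideal z m. e < f (inf x s)"
    proof (rule ccontr)
      assume "\<not> ?thesis"
      then have "component_functional f (tail_ideal z m) x \<le> e"
        by (intro component_functional_least[OF \<open>tail_ideal z m \<noteq> {}\<close>]) (simp add: not_less)
      with big[of m] show False by simp
    qed
    then obtain s where s: "s \<in> tail_ideal z m" "e < f (inf x s)" by blast
    then obtain N c where Nc: "0 \<le> c" "s \<le> c *\<^sub>R (\<Sum>i\<in>{m..<N}. z i)" unfolding tail_ideal_def by blast
    have "f (inf x s) \<le> f (inf x (\<Sum>i\<in>{m..<N}. c *\<^sub>R z i))"
      using Nc(2) by (intro dual_nonneg_mono[OF f] inf_mono) (simp_all add: scaleR_sum_right)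
    also have "\<dots> \<le> f (\<Sum>i\<in>{m..<N}. inf x (c *\<^sub>R z i))"
      using x Nc(1) z by (intro dual_nonneg_mono[OF f] inf_sum_le_sum_inf) (simp_all add: scaleR_nonneg_nonneg)
    finally show ?thesis using s(2) Nc(1) by (intro exI[of _ N] exI[of _ c]) (simp add: blinfun.sum_right)
  qed
  have mono: "f (inf x (c *\<^sub>R z i)) \<le> f (inf x (c' *\<^sub>R z i))" if "c \<le> c'" for c c' i
    using that z[of i] by (intro dual_nonneg_mono[OF f] inf_mono) (simp_all add: scaleR_right_mono)
  obtain K :: nat where K: "f x < real K * e"
    using reals_Archimedean3[OF e] by blast
  have "\<exists>N c. 0 \<le> c \<and> real K * e \<le> (\<Sum>i<N. f (inf x (c *\<^sub>R z i)))"
    by (rule sum_blocks_unbounded[of "\<lambda>c i. f (inf x (c *\<^sub>R z i))", OF mono e block])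
  then obtain N c where Nc: "0 \<le> c" "real K * e \<le> (\<Sum>i<N. f (inf x (c *\<^sub>R z i)))"
    by blast
  have "(\<Sum>i<N. inf x (c *\<^sub>R z i)) \<le> x"
    by (rule disjoint_inf_sum_le[OF z disj x Nc(1) finite_lessThan])
  then have "f (\<Sum>i<N. inf x (c *\<^sub>R z i)) \<le> f x" by (rule dual_nonneg_mono[OF f])
  then have "(\<Sum>i<N. f (inf x (c *\<^sub>R z i))) \<le> f x" by (simp add: blinfun.sum_right)
  then show False using Nc(2) K by linarith
qed

theorem order_continuous_dual_disjoint_null:
  fixes f :: "'a::banach_lattice \<Rightarrow>\<^sub>L real" and z :: "nat \<Rightarrow> 'a"
  assumes oc: "dual_norm_order_continuous TYPE('a)" and f: "dual_le 0 f"
    and z: "\<And>k. 0 \<le> z k" and disj: "\<And>i j. i \<noteq> j \<Longrightarrow> inf (z i) (z j) = 0"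
    and bounded: "\<And>k. norm (z k) \<le> M"
  shows "(\<lambda>k. f (z k)) \<longlonglongrightarrow> 0"
proof -
  have "\<forall>m. \<exists>\<phi> :: 'a \<Rightarrow>\<^sub>L real. dual_le 0 \<phi> \<and>
      (\<forall>x. 0 \<le> x \<longrightarrow> \<phi> x = component_functional f (tail_ideal z m) x)"
  proof
    fix m
    have C: "convex_cone (tail_ideal z m)" by (rule convex_cone_tail_ideal[OF z])
    obtain \<psi> :: "'a \<Rightarrow>\<^sub>L real" where "dual_le 0 \<psi>"
      "\<And>x. 0 \<le> x \<Longrightarrow> \<psi> x = component_functional f (tail_ideal z m) x"
    proof (rule component_functional_blinfun[OF f C])
      show "\<And>s. s \<in> tail_ideal z m \<Longrightarrow> 0 \<le> s" by (rule tail_ideal_nonneg)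
    qed (rule that)
    then show "\<exists>\<phi> :: 'a \<Rightarrow>\<^sub>L real. dual_le 0 \<phi> \<and>
        (\<forall>x. 0 \<le> x \<longrightarrow> \<phi> x = component_functional f (tail_ideal z m) x)" by blast
  qed
  from choice[OF this] obtain \<phi> :: "nat \<Rightarrow> ('a \<Rightarrow>\<^sub>L real)" where \<phi>: "\<forall>m. dual_le 0 (\<phi> m) \<and>
      (\<forall>x. 0 \<le> x \<longrightarrow> \<phi> m x = component_functional f (tail_ideal z m) x)"
    by blast
  have \<phi>_nonneg: "\<And>m. dual_le 0 (\<phi> m)"
    and \<phi>_eq: "\<And>m x. 0 \<le> x \<Longrightarrow> \<phi> m x = component_functional f (tail_ideal z m) x"
    using \<phi> by blast+
  have dec: "dual_le (\<phi> m') (\<phi> m)" if "m \<le> m'" for m m'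
    unfolding dual_le_def
    using component_functional_mono[OF f convex_cone_nonempty[OF convex_cone_tail_ideal[where z = z, OF z]]
        tail_ideal_antimono[where z = z, OF z that]] \<phi>_eq by simp
  have inf_zero: "\<exists>m. \<phi> m x \<le> e" if "0 \<le> x" "0 < e" for x e
    using component_tail_ideal_small[where z = z, OF f z disj that] \<phi>_eq[OF \<open>0 \<le> x\<close>] by simp
  have M: "0 \<le> M" using bounded[of 0] norm_ge_zero[of "z 0"] by linarith
  show ?thesis
  proof (rule LIMSEQ_I)
    fix r :: real assume r: "0 < r"
    have "0 < r / (M + 1)" using r M by simp
    then obtain m where m: "norm (\<phi> m) < r / (M + 1)"
      using order_continuous_dual_decseq_norm[OF oc \<phi>_nonneg dec inf_zero] by blast
    have "norm (f (z k) - 0) < r" if "m \<le> k" for k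
    proof -
      have "f (z k) = f (inf (z k) (z k))" by simp
      also have "\<dots> \<le> \<phi> m (z k)"
        using component_functional_upper[OF f in_tail_ideal[where z = z, OF z that], where x = "z k"] \<phi>_eq[OF z] by simp
      also have "\<dots> \<le> norm (\<phi> m) * norm (z k)" using norm_blinfun[of "\<phi> m" "z k"] by simp
      also have "\<dots> \<le> r / (M + 1) * M" using m bounded[of k] r M by (intro mult_mono) auto
      also have "\<dots> < r" using r M by (simp add: field_simps)
      finally show ?thesis using dual_nonneg_mono[OF f z[of k]] by simp
    qed
    then show "\<exists>no. \<forall>k\<ge>no. norm (f (z k) - 0) < r" by blast
  qed
qed

lemma inf_pprt_pprt_neg: "inf (pprt q) (pprt (- (q::'a::banach_lattice))) = 0"
proof -
  have "pprt (- q) = pprt q - q" using pprt_diff_pprt_neg[of q] by (simp add: algebra_simps)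
  hence "inf (pprt q) (pprt (- q)) = inf (pprt q + 0) (pprt q + (- q))" by simp
  also have "\<dots> = pprt q + inf 0 (- q)" by (simp add: add_inf_distrib_left)
  also have "inf 0 (- q) = - pprt q" unfolding pprt_def by (simp add: neg_sup_eq_inf inf_commute)
  finally show ?thesis by simp
qed

lemma disjoint_pprt_diff_scaleR:
  fixes a b :: "'a::banach_lattice"
  assumes a: "0 \<le> a" and \<alpha>: "0 < \<alpha>" and \<beta>: "0 < \<beta>" and ab: "1 \<le> \<alpha> * \<beta>"
  shows "inf (pprt (a - \<alpha> *\<^sub>R b)) (pprt (b - \<beta> *\<^sub>R a)) = 0"
proof -
  define p where "p = a - \<alpha> *\<^sub>R b"
  define q where "q = b - \<beta> *\<^sub>R a"
  have "p + \<alpha> *\<^sub>R q = (1 - \<alpha> * \<beta>) *\<^sub>R a" unfolding p_def q_def by (simp add: algebra_simps)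
  also have "\<dots> \<le> 0" using ab a by (simp add: scaleR_nonpos_nonneg)
  finally have "p \<le> \<alpha> *\<^sub>R (- q)" by (simp add: add_eq_0_iff2 le_eq_neg)
  hence "pprt p \<le> pprt (\<alpha> *\<^sub>R (- q))" by (rule pprt_mono)
  also have "\<dots> = \<alpha> *\<^sub>R pprt (- q)" by (rule pprt_scaleR) (use \<alpha> in simp)
  finally have pq: "pprt p \<le> \<alpha> *\<^sub>R pprt (- q)" .
  define c where "c = max \<alpha> 1"
  have c: "0 \<le> c" "\<alpha> \<le> c" "1 \<le> c" unfolding c_def by auto
  have "inf (pprt p) (pprt q) \<le> inf (c *\<^sub>R pprt (- q)) (c *\<^sub>R pprt q)"
  proof (rule inf_mono)
    show "pprt p \<le> c *\<^sub>R pprt (- q)" using pq scaleR_right_mono[OF c(2) zero_le_pprt[of "-q"]] by simp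
    show "pprt q \<le> c *\<^sub>R pprt q" using scaleR_right_mono[OF c(3) zero_le_pprt[of q]] by simp
  qed
  also have "\<dots> = c *\<^sub>R inf (pprt (- q)) (pprt q)" by (rule scaleR_inf_distrib[OF c(1), symmetric])
  also have "\<dots> = 0" using inf_pprt_pprt_neg[of q] by (simp add: inf_commute)
  finally have "inf (pprt p) (pprt q) \<le> 0" .
  moreover have "0 \<le> inf (pprt p) (pprt q)" by simp
  ultimately show ?thesis unfolding p_def q_def by (rule antisym)
qed

lemma one_le_four_pow_half_pow:
  assumes "n < m"
  shows "1 \<le> (4::real) ^ m * ((1/2) ^ n * (1/2) ^ Suc m)"
proof -
  have "(2::real) ^ Suc n \<le> 2 ^ m" using assms by (intro power_increasing) auto
  hence "(2::real) ^ n * 2 ^ Suc m \<le> 2 ^ m * 2 ^ m" by (simp add: mult.commute)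
  also have "\<dots> = 4 ^ m" by (simp add: power_mult_distrib[symmetric])
  finally have "(2::real) ^ n * 2 ^ Suc m \<le> 4 ^ m" .
  then show ?thesis by (simp add: power_one_over field_simps)
qed

lemma le_pprt_diff_add_inf_add:
  fixes a b c :: "'a::banach_lattice"
  assumes "0 \<le> c"
  shows "a \<le> pprt (a - (b + c)) + inf a b + c"
proof -
  have "a - pprt (a - (b + c)) = inf a (b + c)" by (rule diff_pprt_diff_eq_inf)
  also have "\<dots> \<le> inf a b + c"
    using assms add_inf_distrib_right[of a b c] by (simp add: add_increasing2 le_infI1)
  finally show ?thesis by (simp add: algebra_simps)
qed

lemma dual_nonneg_le_pprt_diff_add_inf:
  fixes f :: "'a::banach_lattice \<Rightarrow>\<^sub>L real"
  assumes f: "dual_le 0 f" and c: "0 \<le> c"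
  shows "f a \<le> f (pprt (a - b - c)) + f (inf a b) + f c"
proof -
  have "a \<le> pprt (a - b - c) + inf a b + c"
    using le_pprt_diff_add_inf_add[OF c, of a b] by (simp only: diff_diff_eq)
  then have "f a \<le> f (pprt (a - b - c) + inf a b + c)" by (rule dual_nonneg_mono[OF f])
  then show ?thesis by (simp only: blinfun.add_right)
qed

lemma pprt_diff_le_self: "0 \<le> a \<Longrightarrow> 0 \<le> b \<Longrightarrow> pprt (a - b) \<le> (a::'a::banach_lattice)"
  unfolding pprt_def by (rule sup_least) (simp_all add: diff_le_eq add_increasing2)

lemma exists_geometric_weighted_bound:
  fixes x :: "nat \<Rightarrow> 'a::banach_lattice"
  assumes x: "\<And>k. 0 \<le> x k" and bounded: "\<And>k. norm (x k) \<le> M"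
  shows "\<exists>w. \<forall>j. (1 / 2 :: real) ^ j *\<^sub>R x j \<le> w"
proof -
  have "summable (\<lambda>k. (1 / 2 :: real) ^ k *\<^sub>R x k)"
  proof (rule summable_comparison_test)
    show "\<exists>N. \<forall>n\<ge>N. norm ((1 / 2 :: real) ^ n *\<^sub>R x n) \<le> M * (1 / 2) ^ n"
      using bounded by (auto simp: mult.commute intro: mult_left_mono)
    show "summable (\<lambda>n. M * (1 / 2 :: real) ^ n)" by (intro summable_mult summable_geometric) simp
  qed
  then have "(1 / 2 :: real) ^ j *\<^sub>R x j \<le> (\<Sum>k. (1 / 2 :: real) ^ k *\<^sub>R x k)" for j
    by (rule suminf_upper_nonneg) (simp add: x scaleR_nonneg_nonneg)
  then show ?thesis by blast
qed

lemma disjointification_disjoint_less: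
  fixes x :: "nat \<Rightarrow> 'a::banach_lattice" and w :: 'a
  assumes x: "\<And>k. 0 \<le> x k" and w: "\<And>j. (1 / 2 :: real) ^ j *\<^sub>R x j \<le> w" and nm: "n < m"
  shows "inf (pprt (x (Suc n) - 4 ^ n *\<^sub>R (\<Sum>i\<le>n. x i) - (1 / 2 :: real) ^ n *\<^sub>R w))
             (pprt (x (Suc m) - 4 ^ m *\<^sub>R (\<Sum>i\<le>m. x i) - (1 / 2 :: real) ^ m *\<^sub>R w)) = 0"
    (is "inf ?zn ?zm = 0")
proof -
  have w0: "0 \<le> w" using x[of 0] w[of 0] by simp
  have S_nonneg: "0 \<le> (\<Sum>i\<le>k. x i)" for k by (rule sum_nonneg) (rule x)
  have "x (Suc n) \<le> (\<Sum>i\<le>m. x i)"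
  proof -
    have "(\<Sum>i\<le>m. x i) = x (Suc n) + (\<Sum>i\<in>{..m} - {Suc n}. x i)"
      using nm by (intro sum.remove) auto
    moreover have "0 \<le> (\<Sum>i\<in>{..m} - {Suc n}. x i)" by (rule sum_nonneg) (rule x)
    ultimately show ?thesis by simp
  qed
  then have "(4::real) ^ m *\<^sub>R x (Suc n) \<le> 4 ^ m *\<^sub>R (\<Sum>i\<le>m. x i) + (1 / 2 :: real) ^ m *\<^sub>R w"
    using w0 by (intro add_increasing2 scaleR_left_mono) (simp_all add: scaleR_nonneg_nonneg)
  then have zm: "?zm \<le> pprt (x (Suc m) - 4 ^ m *\<^sub>R x (Suc n))"
    by (intro pprt_mono) (simp add: algebra_simps)
  define \<beta> where "\<beta> = (1 / 2 :: real) ^ n * (1 / 2) ^ Suc m"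
  have "\<beta> *\<^sub>R x (Suc m) \<le> (1 / 2 :: real) ^ n *\<^sub>R w"
    using scaleR_left_mono[OF w[of "Suc m"], of "(1 / 2 :: real) ^ n"] by (simp add: \<beta>_def)
  then have "\<beta> *\<^sub>R x (Suc m) \<le> 4 ^ n *\<^sub>R (\<Sum>i\<le>n. x i) + (1 / 2 :: real) ^ n *\<^sub>R w"
    using S_nonneg[of n] by (simp add: add_increasing scaleR_nonneg_nonneg)
  then have zn: "?zn \<le> pprt (x (Suc n) - \<beta> *\<^sub>R x (Suc m))"
    by (intro pprt_mono) (simp add: algebra_simps)
  have "inf ?zm ?zn \<le> inf (pprt (x (Suc m) - 4 ^ m *\<^sub>R x (Suc n))) (pprt (x (Suc n) - \<beta> *\<^sub>R x (Suc m)))"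
    using zm zn by (rule inf_mono)
  also have "\<dots> = 0"
    by (rule disjoint_pprt_diff_scaleR[OF x]) (use one_le_four_pow_half_pow[OF nm] in \<open>simp_all add: \<beta>_def\<close>)
  finally show ?thesis by (simp add: inf_commute antisym)
qed

lemma disjointification_disjoint:
  fixes x :: "nat \<Rightarrow> 'a::banach_lattice" and w :: 'a
  assumes x: "\<And>k. 0 \<le> x k" and w: "\<And>j. (1 / 2 :: real) ^ j *\<^sub>R x j \<le> w" and "n \<noteq> m"
  shows "inf (pprt (x (Suc n) - 4 ^ n *\<^sub>R (\<Sum>i\<le>n. x i) - (1 / 2 :: real) ^ n *\<^sub>R w))
             (pprt (x (Suc m) - 4 ^ m *\<^sub>R (\<Sum>i\<le>m. x i) - (1 / 2 :: real) ^ m *\<^sub>R w)) = 0"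
proof (cases "n < m")
  case True
  then show ?thesis by (rule disjointification_disjoint_less[OF x w])
next
  case False
  then have "m < n" using \<open>n \<noteq> m\<close> by simp
  from disjointification_disjoint_less[OF x w this] show ?thesis by (simp only: inf.commute)
qed

lemma exists_seq_small_inf_partial_sums:
  fixes y :: "nat \<Rightarrow> 'a::banach_lattice" and f :: "'a \<Rightarrow>\<^sub>L real"
  assumes frequent: "\<And>N. \<exists>n\<ge>N. \<delta> \<le> f (y n)"
    and small: "\<And>w. 0 \<le> w \<Longrightarrow> (\<lambda>n. f (inf (y n) w)) \<longlonglongrightarrow> 0"
    and y: "\<And>n. 0 \<le> y n" and \<delta>: "0 < \<delta>"
  shows "\<exists>\<sigma>. (\<forall>k. \<delta> \<le> f (y (\<sigma> k))) \<and>
    (\<forall>k. f (inf (y (\<sigma> (Suc k))) (4 ^ k *\<^sub>R (\<Sum>i\<le>k. y (\<sigma> i)))) < \<delta> / 4)"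
proof -
  have good_index: "\<exists>n. \<delta> \<le> f (y n) \<and> f (inf (y n) ((4 ^ k) *\<^sub>R S)) < \<delta> / 4"
    if S: "0 \<le> S" for S k
  proof -
    have "0 \<le> (4::real) ^ k *\<^sub>R S" using S by (simp add: scaleR_nonneg_nonneg)
    from small[OF this] have "\<forall>\<^sub>F n in sequentially. f (inf (y n) ((4 ^ k) *\<^sub>R S)) < \<delta> / 4"
      by (rule order_tendstoD) (use \<delta> in simp)
    then obtain N where "\<And>n. N \<le> n \<Longrightarrow> f (inf (y n) ((4 ^ k) *\<^sub>R S)) < \<delta> / 4"
      unfolding eventually_sequentially by blast
    then show ?thesis using frequent[of N] by blast
  qed
  define sel where "sel k S = (SOME n. \<delta> \<le> f (y n) \<and> f (inf (y n) ((4 ^ k) *\<^sub>R S)) < \<delta> / 4)" for k S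
  have sel: "\<delta> \<le> f (y (sel k S)) \<and> f (inf (y (sel k S)) ((4 ^ k) *\<^sub>R S)) < \<delta> / 4" if "0 \<le> S" for k S
    unfolding sel_def by (rule someI_ex) (rule good_index[OF that])
  obtain n0 where n0: "\<delta> \<le> f (y n0)" using frequent by blast
  define S where "S = rec_nat (y n0) (\<lambda>k s. s + y (sel k s))"
  define \<sigma> where "\<sigma> k = (case k of 0 \<Rightarrow> n0 | Suc j \<Rightarrow> sel j (S j))" for k
  have partial_sum: "S k = (\<Sum>i\<le>k. y (\<sigma> i))" for k
    by (induction k) (simp_all add: S_def \<sigma>_def)
  show ?thesis
  proof (intro exI[of _ \<sigma>] conjI allI)
    show "\<delta> \<le> f (y (\<sigma> k))" for k
      using n0 sel[of "S (k - 1)" "k - 1"] by (cases k) (simp_all add: \<sigma>_def partial_sum sum_nonneg y)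
    show "f (inf (y (\<sigma> (Suc k))) (4 ^ k *\<^sub>R (\<Sum>i\<le>k. y (\<sigma> i)))) < \<delta> / 4" for k
      using sel[of "S k" k] by (simp add: \<sigma>_def partial_sum sum_nonneg y)
  qed
qed

text \<open>Write x k = y (\<sigma> k) for indices with \<delta> \<le> f (x k) and
  f (inf (x (k + 1)) (4 ^ k * (x 0 + \<dots> + x k))) < \<delta> / 4. With w = \<Sum> 2 ^ -j * x j, the elements
  pprt (x (k + 1) - 4 ^ k * (x 0 + \<dots> + x k) - 2 ^ -k * w) are pairwise disjoint and carry at
  least 3 \<delta> / 4 - 2 ^ -k * f w of f, contradicting order_continuous_dual_disjoint_null.\<close>

theorem order_continuous_dual_inf_null:
  fixes f :: "'a::banach_lattice \<Rightarrow>\<^sub>L real" and y :: "nat \<Rightarrow> 'a"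
  assumes oc: "dual_norm_order_continuous TYPE('a)" and f: "dual_le 0 f"
    and y: "\<And>n. 0 \<le> y n" and bounded: "\<And>n. norm (y n) \<le> M"
    and small: "\<And>w. 0 \<le> w \<Longrightarrow> (\<lambda>n. f (inf (y n) w)) \<longlonglongrightarrow> 0"
  shows "(\<lambda>n. f (y n)) \<longlonglongrightarrow> 0"
proof (rule ccontr)
  assume "\<not> ?thesis"
  then obtain \<delta> where \<delta>: "0 < \<delta>" and abs_frequent: "\<forall>N. \<exists>n\<ge>N. \<delta> \<le> \<bar>f (y n)\<bar>"
    unfolding LIMSEQ_def dist_real_def by (auto simp: not_less)
  have frequent: "\<exists>n\<ge>N. \<delta> \<le> f (y n)" for N
  proof -
    obtain n where "N \<le> n" "\<delta> \<le> \<bar>f (y n)\<bar>" using abs_frequent by blast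
    moreover have "0 \<le> f (y n)" using f y unfolding dual_le_0_iff by blast
    ultimately show ?thesis by auto
  qed
  obtain \<sigma> where \<sigma>: "\<And>k. \<delta> \<le> f (y (\<sigma> k))"
    "\<And>k. f (inf (y (\<sigma> (Suc k))) (4 ^ k *\<^sub>R (\<Sum>i\<le>k. y (\<sigma> i)))) < \<delta> / 4"
  proof -
    have "\<exists>\<sigma>. (\<forall>k. \<delta> \<le> f (y (\<sigma> k))) \<and>
        (\<forall>k. f (inf (y (\<sigma> (Suc k))) (4 ^ k *\<^sub>R (\<Sum>i\<le>k. y (\<sigma> i)))) < \<delta> / 4)"
    proof (rule exists_seq_small_inf_partial_sums)
      show "(\<lambda>n. f (inf (y n) w)) \<longlonglongrightarrow> 0" if "0 \<le> w" for w using that by (rule small)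
    qed (use frequent y \<delta> in simp_all)
    then show thesis using that by blast
  qed
  define x where "x k = y (\<sigma> k)" for k
  have x: "0 \<le> x k" "norm (x k) \<le> M" for k unfolding x_def by (rule y, rule bounded)
  obtain w where w: "\<And>j. (1 / 2 :: real) ^ j *\<^sub>R x j \<le> w"
    using exists_geometric_weighted_bound[where x = x, OF x] by blast
  have w_nonneg: "0 \<le> w" using x(1)[of 0] w[of 0] by simp
  define z where "z k = pprt (x (Suc k) - 4 ^ k *\<^sub>R (\<Sum>i\<le>k. x i) - (1 / 2 :: real) ^ k *\<^sub>R w)" for k
  have z_nonneg: "0 \<le> z k" for k by (simp add: z_def)
  have z_bounded: "norm (z k) \<le> M" for k
  proof -
    have "z k \<le> x (Suc k)"
      unfolding z_def diff_diff_eq using x(1) w_nonneg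
      by (intro pprt_diff_le_self) (simp_all add: add_nonneg_nonneg scaleR_nonneg_nonneg sum_nonneg)
    then show ?thesis using norm_mono_nonneg[OF z_nonneg] x(2)[of "Suc k"] by (metis order_trans)
  qed
  have "(\<lambda>k. f (z k)) \<longlonglongrightarrow> 0"
  proof (rule order_continuous_dual_disjoint_null[OF oc f z_nonneg _ z_bounded])
    show "inf (z i) (z j) = 0" if "i \<noteq> j" for i j
      unfolding z_def by (rule disjointification_disjoint[where x = x and w = w, OF x(1) w that])
  qed
  moreover have "3 * \<delta> / 4 \<le> f (z k) + (1 / 2 :: real) ^ k * f w" for k
  proof -
    have "0 \<le> (1 / 2 :: real) ^ k *\<^sub>R w" using w_nonneg by (simp add: scaleR_nonneg_nonneg)
    from dual_nonneg_le_pprt_diff_add_inf[OF f this, of "x (Suc k)" "4 ^ k *\<^sub>R (\<Sum>i\<le>k. x i)"]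
    have "f (x (Suc k)) \<le> f (z k) + f (inf (x (Suc k)) (4 ^ k *\<^sub>R (\<Sum>i\<le>k. x i))) + (1 / 2) ^ k * f w"
      unfolding z_def by (simp only: blinfun.scaleR_right real_scaleR_def)
    then show ?thesis using \<sigma>(1)[of "Suc k"] \<sigma>(2)[of k] unfolding x_def by linarith
  qed
  moreover have "(\<lambda>k. (1 / 2 :: real) ^ k * f w) \<longlonglongrightarrow> 0"
    by (rule tendsto_mult_left_zero[OF LIMSEQ_power_zero]) simp
  ultimately have "(\<lambda>k. f (z k) + (1 / 2 :: real) ^ k * f w) \<longlonglongrightarrow> 0"
    and "\<And>k. 3 * \<delta> / 4 \<le> f (z k) + (1 / 2 :: real) ^ k * f w"
    using tendsto_add_zero by blast+
  then have "3 * \<delta> / 4 \<le> 0" by (intro LIMSEQ_le_const) auto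
  then show False using \<delta> by simp
qed

theorem order_continuous_dual_uaw_null_weakly_null:
  fixes x :: "nat \<Rightarrow> 'a::banach_lattice"
  assumes oc: "dual_norm_order_continuous TYPE('a)" and bounded: "bounded (range x)"
    and uaw: "uaw_null x"
  shows "weakly_null x"
  unfolding weakly_null_def
proof
  fix f :: "'a \<Rightarrow>\<^sub>L real"
  obtain M where M: "\<And>n. norm (x n) \<le> M" using bounded unfolding bounded_iff by blast
  have lmod_null: "(\<lambda>n. g (lmod (x n))) \<longlonglongrightarrow> 0" if g: "dual_le 0 g" for g
  proof (rule order_continuous_dual_inf_null[OF oc g lmod_nonneg])
    show "norm (lmod (x n)) \<le> M" for n using M by (simp add: norm_lmod)
    show "(\<lambda>n. g (inf (lmod (x n)) w)) \<longlonglongrightarrow> 0" if "0 \<le> w" for w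
      using uaw that unfolding uaw_null_def weakly_null_def by blast
  qed
  obtain f1 f2 where f12: "dual_le 0 f1" "dual_le 0 f2" "\<And>y. f y = f1 y - f2 y"
    by (rule blinfun_eq_diff_nonneg[of f]) (rule that)
  have "norm (f (x n)) \<le> f1 (lmod (x n)) + f2 (lmod (x n))" for n
    using dual_nonneg_abs_le[OF f12(1), of "x n"] dual_nonneg_abs_le[OF f12(2), of "x n"] f12(3)
    by simp
  then have "\<forall>\<^sub>F n in sequentially. norm (f (x n)) \<le> f1 (lmod (x n)) + f2 (lmod (x n))"
    by (simp add: always_eventually)
  moreover have "(\<lambda>n. f1 (lmod (x n)) + f2 (lmod (x n))) \<longlonglongrightarrow> 0"
    using tendsto_add[OF lmod_null[OF f12(1)] lmod_null[OF f12(2)]] by simp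
  ultimately show "(\<lambda>n. f (x n)) \<longlonglongrightarrow> 0" by (rule Lim_null_comparison)
qed

theorem corollary4p2:
  fixes T :: "'a::banach_lattice \<Rightarrow>\<^sub>L 'b::banach_lattice"
  assumes "dual_norm_order_continuous TYPE('a)"
    and "reflexive_space TYPE('b)"
    and "weak_Dunford_Pettis T"
  shows "uaw_Dunford_Pettis T"
  unfolding uaw_Dunford_Pettis_def
proof (intro allI impI)
  fix x :: "nat \<Rightarrow> 'a"
  assume "bounded (range x) \<and> uaw_null x"
  then have "weakly_null x" using order_continuous_dual_uaw_null_weakly_null[OF assms(1)] by blast
  then show "(\<lambda>n. norm (T (x n))) \<longlonglongrightarrow> 0"
    by (rule weak_Dunford_Pettis_reflexive_norm_null[OF assms(2,3)])
qed

end
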